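(* Let $L$ be a standard Levi subgroup of $\mathrm{GL}_n(\mathbb{F}_q)$ and $L'=L\cap\mathrm{SL}_n(\mathbb{F}_q)$. Let $Z(L)$, $Z(L')$ be the centres of $L$ and $L'$. Then there is an isomorphism of $W(k)[L']$-modules $$\mathrm{res}_{L'}^L\mathcal Y_L\cong\bigoplus^{|Z(L):Z(L')|}\ \bigoplus_{[\mu]}\mathcal Y_{L',\mu},$$ where $[\mu]$ runs over the $T'$-orbits in $O_U(L')$ (for one representative $\mu$ of each orbit), and the outer sum denotes $|Z(L):Z(L')|$ copies.
   Context: $q$ a power of a prime $p$; $k$ algebraically closed of characteristic $\ell\neq p$; $W(k)$ its ring of Witt vectors. Standard Levi subgroups of $\mathrm{GL}_n(\mathbb{F}_q)$ are block-diagonal. $U$ denotes the group of upper unitriangular matrices in $L$ (it lies in $L'$). $T$ is the diagonal torus of $L$ and $T'=T\cap L'$; $T'$ acts on characters of $U$ by conjugation. $O_U(L')$ is the set of non-degenerate characters $\mu:U\to W(k)^\times$ (trivial on $[U,U]$, nontrivial on each simple root subgroup). For such $\mu$, $W(k)_\mu$ is $W(k)$ with $U$ acting via $\mu$; $\mathcal Y_{L',\mu}=\mathrm{ind}_U^{L'}W(k)_\mu$ and $\mathcal Y_L=\mathrm{ind}_U^LW(k)_\mu$ (the latter independent of $\mu$ up to isomorphism, the Gelfand–Graev $W(k)$-lattice of $L$). *)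

theory Defs
  imports "Jordan_Normal_Form.Determinant" "HOL-Computational_Algebra.Primes"
begin

text \<open>Block index of row/column i for the composition ns of n (blocks numbered from 0).\<close>
definition blk :: "nat list \<Rightarrow> nat \<Rightarrow> nat" where
  "blk ns i = card {k. k < length ns \<and> sum_list (take (Suc k) ns) \<le> i}"

definition Levi :: "nat list \<Rightarrow> nat \<Rightarrow> 'f::field mat set" where
  "Levi ns n = {A \<in> carrier_mat n n. det A \<noteq> 0 \<and>
      (\<forall>i<n. \<forall>j<n. blk ns i \<noteq> blk ns j \<longrightarrow> A $$ (i,j) = 0)}"

definition Levi' :: "nat list \<Rightarrow> nat \<Rightarrow> 'f::field mat set" where
  "Levi' ns n = {A \<in> Levi ns n. det A = 1}"

definition Uni :: "nat list \<Rightarrow> nat \<Rightarrow> 'f::field mat set" where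
  "Uni ns n = {A \<in> Levi ns n. (\<forall>i<n. A $$ (i,i) = 1) \<and> (\<forall>i<n. \<forall>j<n. j < i \<longrightarrow> A $$ (i,j) = 0)}"

definition Tor :: "nat list \<Rightarrow> nat \<Rightarrow> 'f::field mat set" where
  "Tor ns n = {A \<in> Levi ns n. \<forall>i<n. \<forall>j<n. i \<noteq> j \<longrightarrow> A $$ (i,j) = 0}"

definition Tor' :: "nat list \<Rightarrow> nat \<Rightarrow> 'f::field mat set" where
  "Tor' ns n = Tor ns n \<inter> Levi' ns n"

definition centre :: "'f::field mat set \<Rightarrow> 'f mat set" where
  "centre H = {z \<in> H. \<forall>g\<in>H. z * g = g * z}"

definition rootmat :: "nat \<Rightarrow> nat \<Rightarrow> 'f::field \<Rightarrow> 'f mat" where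
  "rootmat n i a = mat n n (\<lambda>(r,c). if r = c then 1 else if r = i \<and> c = Suc i then a else 0)"

text \<open>O_U(L'): group homomorphisms U \<rightarrow> W^\<times> (these are automatically trivial on [U,U],
  as W is commutative) that are nontrivial on every simple root subgroup of L
  (simple roots (i,i+1) with i, i+1 in the same block).\<close>
definition nondeg_chars :: "nat list \<Rightarrow> nat \<Rightarrow> ('f::field mat \<Rightarrow> 'w::idom) set" where
  "nondeg_chars ns n = {\<mu>.
      (\<forall>u\<in>Uni ns n. \<mu> u dvd 1) \<and>
      (\<forall>u\<in>Uni ns n. \<forall>v\<in>Uni ns n. \<mu> (u * v) = \<mu> u * \<mu> v) \<and>
      (\<forall>i. Suc i < n \<and> blk ns i = blk ns (Suc i) \<longrightarrow> (\<exists>a. \<mu> (rootmat n i a) \<noteq> 1))}"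

definition same_orbit :: "nat list \<Rightarrow> nat \<Rightarrow> ('f::field mat \<Rightarrow> 'w) \<Rightarrow> ('f mat \<Rightarrow> 'w) \<Rightarrow> bool" where
  "same_orbit ns n \<mu> \<nu> \<longleftrightarrow> (\<exists>t\<in>Tor' ns n. \<exists>t'\<in>Tor' ns n. t' * t = 1\<^sub>m n \<and>
      (\<forall>u\<in>Uni ns n. \<nu> u = \<mu> (t' * u * t)))"

definition orbit_reps :: "nat list \<Rightarrow> nat \<Rightarrow> ('f::field mat \<Rightarrow> 'w::idom) set \<Rightarrow> bool" where
  "orbit_reps ns n Reps \<longleftrightarrow> Reps \<subseteq> nondeg_chars ns n \<and>
     (\<forall>\<mu>\<in>nondeg_chars ns n. \<exists>\<nu>\<in>Reps. same_orbit ns n \<mu> \<nu>) \<and>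
     (\<forall>\<nu>1\<in>Reps. \<forall>\<nu>2\<in>Reps. same_orbit ns n \<nu>1 \<nu>2 \<longrightarrow> \<nu>1 = \<nu>2)"

definition ind_mod :: "'f::field mat set \<Rightarrow> 'f mat set \<Rightarrow> ('f mat \<Rightarrow> 'w::idom) \<Rightarrow> ('f mat \<Rightarrow> 'w) set" where
  "ind_mod H U \<mu> = {f. (\<forall>h\<in>H. \<forall>u\<in>U. f (u * h) = \<mu> u * f h) \<and> (\<forall>x. x \<notin> H \<longrightarrow> f x = 0)}"

definition ract :: "'f::field mat \<Rightarrow> ('f mat \<Rightarrow> 'w) \<Rightarrow> ('f mat \<Rightarrow> 'w)" where
  "ract g f = (\<lambda>h. f (h * g))"

text \<open>Direct sum of m copies of the sum over Reps of Y_{L',\<nu>}; components indexed by (j,\<nu>).\<close>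
definition dsum_mod :: "nat list \<Rightarrow> nat \<Rightarrow> nat \<Rightarrow> ('f::field mat \<Rightarrow> 'w::idom) set
     \<Rightarrow> (nat \<times> ('f mat \<Rightarrow> 'w) \<Rightarrow> 'f mat \<Rightarrow> 'w) set" where
  "dsum_mod ns n m Reps = {F.
      (\<forall>j \<nu>. j < m \<and> \<nu> \<in> Reps \<longrightarrow> F (j,\<nu>) \<in> ind_mod (Levi' ns n) (Uni ns n) \<nu>) \<and>
      (\<forall>j \<nu>. \<not> (j < m \<and> \<nu> \<in> Reps) \<longrightarrow> F (j,\<nu>) = (\<lambda>_. 0))}"

definition gmod_iso :: "'f::field mat set \<Rightarrow> ('f mat \<Rightarrow> 'w::idom) set
     \<Rightarrow> ('i \<Rightarrow> 'f mat \<Rightarrow> 'w) set \<Rightarrow> (('f mat \<Rightarrow> 'w) \<Rightarrow> ('i \<Rightarrow> 'f mat \<Rightarrow> 'w)) \<Rightarrow> bool" where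
  "gmod_iso G M N \<Phi> \<longleftrightarrow> bij_betw \<Phi> M N \<and>
     (\<forall>a. \<forall>f\<in>M. \<forall>g\<in>M. \<Phi> (\<lambda>x. a * f x + g x) = (\<lambda>i x. a * \<Phi> f i x + \<Phi> g i x)) \<and>
     (\<forall>s\<in>G. \<forall>f\<in>M. \<Phi> (ract s f) = (\<lambda>i. ract s (\<Phi> f i)))"

text \<open>'w is (up to isomorphism) the ring of Witt vectors W(k) of an algebraically closed
  field k of characteristic l: a complete discrete valuation ring with uniformizer l
  (hence absolutely unramified of characteristic 0) whose residue field W/lW = k is
  algebraically closed.\<close>
definition witt_alg_closed :: "nat \<Rightarrow> 'w::idom itself \<Rightarrow> bool" where
  "witt_alg_closed l _ \<longleftrightarrow> prime l \<and> (of_nat l :: 'w) \<noteq> 0 \<and> \<not> (of_nat l :: 'w) dvd 1 \<and>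
     (\<forall>x::'w. x \<noteq> 0 \<longrightarrow> (\<exists>u m. u dvd 1 \<and> x = u * of_nat l ^ m)) \<and>
     (\<forall>x::'w. (\<forall>m. (of_nat l :: 'w) ^ m dvd x) \<longrightarrow> x = 0) \<and>
     (\<forall>s::nat \<Rightarrow> 'w. (\<forall>m. (of_nat l :: 'w) ^ m dvd (s (Suc m) - s m)) \<longrightarrow>
         (\<exists>x. \<forall>m. (of_nat l :: 'w) ^ m dvd (x - s m))) \<and>
     (\<forall>d::nat. d \<ge> 1 \<longrightarrow> (\<forall>c::nat \<Rightarrow> 'w. \<exists>x. (of_nat l :: 'w) dvd (x ^ d + (\<Sum>i<d. c i * x ^ i))))"

end

theory Submission
  imports Defs
begin

text \<open>
  Since \<open>det u = 1\<close> on \<open>U\<close> and every determinant value of \<open>L\<close> is attained on the diagonal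
  torus \<open>T\<close>, choosing for each value \<open>c\<close> one \<open>e\<^sub>c \<in> T\<close> of determinant \<open>c\<close> writes \<open>L\<close> as the
  disjoint union of the cosets \<open>e\<^sub>c L'\<close>, each stable under left multiplication by \<open>U\<close>.
  Mackey's formula then decomposes the restriction of \<open>Y\<^sub>L\<close> to \<open>L'\<close> as the sum over \<open>c\<close> of
  the modules induced from the twisted characters \<open>\<mu>\<^sup>e u = \<mu> (e u e\<^sup>-\<^sup>1)\<close>, \<open>e = e\<^sub>c\<close>.

  It remains to sort the twists into \<open>T'\<close>-orbits. As \<open>q\<close> is invertible in \<open>W(k)\<close>, any two
  nontrivial additive characters of \<open>F\<^sub>q\<close> differ by a dilation, so \<open>T\<close> acts transitively on
  the non-degenerate characters, and the stabiliser of \<open>\<mu>\<close> in \<open>T\<close> is the group \<open>Z(L)\<close> of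
  block scalars. Hence \<open>\<mu>\<^sup>e\<close> and \<open>\<mu>\<^sup>e\<^sup>'\<close> are \<open>T'\<close>-conjugate exactly when \<open>det e\<close> and
  \<open>det e'\<close> agree modulo \<open>det Z(L)\<close>, and each orbit occurs for
  \<open>|det Z(L)| = |Z(L) : Z(L')|\<close> values of \<open>c\<close>.
\<close>

lemma finite_carrier_mat: "finite (carrier_mat n m :: 'a::finite mat set)"
proof -
  let ?entries = "\<lambda>A :: 'a mat. restrict (\<lambda>p. A $$ p) ({..<n} \<times> {..<m})"
  have "inj_on ?entries (carrier_mat n m)"
  proof (rule inj_onI)
    fix A B :: "'a mat"
    assume A: "A \<in> carrier_mat n m" and B: "B \<in> carrier_mat n m" and eq: "?entries A = ?entries B"
    show "A = B"
    proof (rule eq_matI)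
      fix i j assume "i < dim_row B" "j < dim_col B"
      then show "A $$ (i,j) = B $$ (i,j)" using fun_cong[OF eq, of "(i,j)"] B by auto
    qed (use A B in auto)
  qed
  moreover have "finite (PiE ({..<n} \<times> {..<m}) (\<lambda>_. UNIV :: 'a set))"
    by (intro finite_PiE) auto
  moreover have "?entries ` carrier_mat n m \<subseteq> PiE ({..<n} \<times> {..<m}) (\<lambda>_. UNIV)"
    by (rule image_subsetI) (simp add: restrict_PiE_iff)
  ultimately show ?thesis by (meson finite_imageD finite_subset)
qed

lemma index_mat_diag [simp]: "i < n \<Longrightarrow> j < n \<Longrightarrow> mat_diag n d $$ (i,j) = (if i = j then d i else 0)"
  by (simp add: mat_diag_def)

lemma dim_mat_diag [simp]: "dim_row (mat_diag n d) = n" "dim_col (mat_diag n d) = n"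
  by (simp_all add: mat_diag_def)

lemma det_mat_diag: "det (mat_diag n d) = (\<Prod>i<n. d i)"
proof -
  have "det (mat_diag n d) = prod_list (diag_mat (mat_diag n d))"
    by (rule det_upper_triangular) auto
  also have "\<dots> = (\<Prod>i<n. d i)"
    by (simp add: diag_mat_def prod.distinct_set_conv_list[of "[0..<n]", symmetric] atLeast0LessThan)
  finally show ?thesis .
qed

lemma assoc_mult_mat_dim:
  "dim_col A = dim_row B \<Longrightarrow> dim_col B = dim_row C \<Longrightarrow> A * B * C = A * (B * C)"
  by (rule assoc_mult_mat) auto

lemma mult_addrow_mat:
  assumes "dim_col A = n" "k < n"
  shows "A * addrow_mat n (a::'a::comm_semiring_1) k l = addcol a l k A"
proof -
  have "A \<in> carrier_mat (dim_row A) n" using assms(1) by (intro carrier_matI) simp_all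
  from addcol_mat[OF this assms(2)] show ?thesis by (rule sym)
qed

lemma addrow_mat_mult:
  assumes "dim_row A = n" "l < n"
  shows "addrow_mat n (a::'a::comm_semiring_1) k l * A = addrow a k l A"
proof -
  have "A \<in> carrier_mat n (dim_col A)" using assms(1) by (intro carrier_matI) simp_all
  from addrow_mat[OF this assms(2)] show ?thesis by (rule sym)
qed

lemma addrow_mat_zero: "addrow_mat n 0 i j = 1\<^sub>m n"
  by (rule eq_matI) auto

lemma addrow_mat_add:
  assumes "i \<noteq> j" "i < n" "j < n"
  shows "addrow_mat n (a::'a::comm_ring_1) i j * addrow_mat n b i j = addrow_mat n (a + b) i j"
  using assms by (simp add: mult_addrow_mat) (rule eq_matI; auto simp: add.commute)

lemma addrow_mat_commutator:
  assumes "i \<noteq> k" "k \<noteq> j" "i \<noteq> j" "i < n" "j < n" "k < n"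
  shows "addrow_mat n (a::'a::comm_ring_1) i k * addrow_mat n b k j * addrow_mat n (- a) i k * addrow_mat n (- b) k j
    = addrow_mat n (a * b) i j"
proof (rule eq_matI)
  fix r c assume "r < dim_row (addrow_mat n (a * b) i j)" "c < dim_col (addrow_mat n (a * b) i j)"
  then show "(addrow_mat n a i k * addrow_mat n b k j * addrow_mat n (- a) i k * addrow_mat n (- b) k j) $$ (r, c)
    = addrow_mat n (a * b) i j $$ (r, c)"
    using assms by (simp add: mult_addrow_mat)
qed (use assms in \<open>simp_all add: mult_addrow_mat\<close>)

lemma rootmat_eq_addrow_mat: "rootmat n i a = addrow_mat n a i (Suc i)"
  unfolding rootmat_def addrow_mat_def by (rule eq_matI) auto

lemma blk_mono: "i \<le> j \<Longrightarrow> blk ns i \<le> blk ns j"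
  unfolding blk_def by (rule card_mono) auto

lemma blk_between: "i \<le> k \<Longrightarrow> k \<le> j \<Longrightarrow> blk ns i = blk ns j \<Longrightarrow> blk ns k = blk ns i"
  using blk_mono[of i k ns] blk_mono[of k j ns] by simp

lemma blk_constant:
  assumes step: "\<And>k. Suc k < n \<Longrightarrow> blk ns k = blk ns (Suc k) \<Longrightarrow> f k = f (Suc k)"
    and "i < n" "j < n" "blk ns i = blk ns j"
  shows "f i = f j"
proof -
  have ordered: "f i = f j" if "i \<le> j" "j < n" "blk ns i = blk ns j" for i j
  proof -
    have "f i = f k" if "i \<le> k" "k \<le> j" for k
      using that
    proof (induction k)
      case (Suc k)
      show ?case
      proof (cases "i = Suc k")
        case False
        then have "i \<le> k" using Suc.prems by simp
        then have "blk ns k = blk ns (Suc k)"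
          using blk_between[of i k j] blk_between[of i "Suc k" j] Suc.prems \<open>blk ns i = blk ns j\<close> by simp
        then show ?thesis using Suc \<open>i \<le> k\<close> step[of k] \<open>j < n\<close> by simp
      qed simp
    qed simp
    then show ?thesis using that by simp
  qed
  show ?thesis
  proof (cases "i \<le> j")
    case True
    then show ?thesis using ordered assms(3,4) by blast
  next
    case False
    then show ?thesis using ordered[of j i] assms(2,4) by simp
  qed
qed

lemma Levi_carrier: "A \<in> Levi ns n \<Longrightarrow> A \<in> carrier_mat n n"
  by (simp add: Levi_def)

lemma Levi_det: "A \<in> Levi ns n \<Longrightarrow> det A \<noteq> 0"
  by (simp add: Levi_def)

lemma Levi_off_block: "A \<in> Levi ns n \<Longrightarrow> i < n \<Longrightarrow> j < n \<Longrightarrow> blk ns i \<noteq> blk ns j \<Longrightarrow> A $$ (i,j) = 0"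
  by (simp add: Levi_def)

lemma Levi'_Levi: "A \<in> Levi' ns n \<Longrightarrow> A \<in> Levi ns n"
  by (simp add: Levi'_def)

lemma Levi'_carrier: "A \<in> Levi' ns n \<Longrightarrow> A \<in> carrier_mat n n"
  by (simp add: Levi'_def Levi_def)

lemma one_Levi: "1\<^sub>m n \<in> Levi ns n"
  by (simp add: Levi_def)

lemma one_Levi': "1\<^sub>m n \<in> Levi' ns n"
  by (simp add: Levi'_def one_Levi)

lemma Levi_mult:
  assumes A: "A \<in> Levi ns n" and B: "B \<in> Levi ns n"
  shows "A * B \<in> Levi ns n"
proof -
  have cA: "A \<in> carrier_mat n n" and cB: "B \<in> carrier_mat n n"
    using A B by (simp_all add: Levi_carrier)
  have "(A * B) $$ (i,j) = 0" if "i < n" "j < n" "blk ns i \<noteq> blk ns j" for i j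
  proof -
    have "A $$ (i,l) * B $$ (l,j) = 0" if "l < n" for l
      using Levi_off_block[OF A, of i l] Levi_off_block[OF B, of l j] \<open>i < n\<close> \<open>j < n\<close>
        \<open>blk ns i \<noteq> blk ns j\<close> that by fastforce
    then show ?thesis using cA cB that by (auto simp: scalar_prod_def intro!: sum.neutral)
  qed
  then show ?thesis
    using cA cB A B by (simp add: Levi_def det_mult[OF cA cB])
qed

lemma Levi'_mult: "A \<in> Levi' ns n \<Longrightarrow> B \<in> Levi' ns n \<Longrightarrow> A * B \<in> Levi' ns n"
  by (auto simp: Levi'_def Levi_mult det_mult[OF Levi_carrier Levi_carrier])

text \<open>Right multiplication by \<open>s\<close> is injective on the finite set \<open>L'\<close>, hence onto; this spares
  showing that the inverse matrix is again block diagonal.\<close>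
lemma Levi'_right_inverse:
  assumes s: "s \<in> (Levi' ns n :: 'f::{finite,field} mat set)"
  shows "\<exists>s'\<in>Levi' ns n. s * s' = 1\<^sub>m n"
proof -
  have cs: "s \<in> carrier_mat n n" using Levi'_carrier[OF s] .
  obtain B where B: "B \<in> carrier_mat n n" "s * B = 1\<^sub>m n"
    using det_non_zero_imp_unit[OF cs Levi_det[OF Levi'_Levi[OF s]], of undefined]
    by (auto simp: Units_def ring_mat_def)
  have "inj_on (\<lambda>h. h * s) (Levi' ns n)"
  proof (rule inj_onI)
    fix h1 h2 assume h: "h1 \<in> Levi' ns n" "h2 \<in> Levi' ns n" and eq: "h1 * s = h2 * s"
    have "h * s * B = h" if "h \<in> Levi' ns n" for h
      using assoc_mult_mat[OF Levi'_carrier[OF that] cs B(1)] B(2) Levi'_carrier[OF that] by simp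
    then show "h1 = h2" using eq h by metis
  qed
  moreover have "(\<lambda>h. h * s) ` Levi' ns n \<subseteq> Levi' ns n" using Levi'_mult[OF _ s] by auto
  moreover have "finite (Levi' ns n :: 'f mat set)"
    using finite_carrier_mat[of n n] by (rule finite_subset[rotated]) (auto simp: Levi'_carrier)
  ultimately have "(\<lambda>h. h * s) ` Levi' ns n = Levi' ns n" by (simp add: endo_inj_surj)
  then obtain s' where s': "s' \<in> Levi' ns n" "s' * s = 1\<^sub>m n"
    using one_Levi' by (metis imageE)
  then have "s * s' = 1\<^sub>m n" using cs by (metis Levi'_carrier mat_mult_left_right_inverse)
  then show ?thesis using s' by blast
qed

lemma Levi'_right_cancel:
  assumes x: "x \<in> carrier_mat n n" and s: "s \<in> (Levi' ns n :: 'f::{finite,field} mat set)"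
    and xs: "x * s \<in> Levi' ns n"
  shows "x \<in> Levi' ns n"
proof -
  obtain s' where s': "s' \<in> Levi' ns n" "s * s' = 1\<^sub>m n" using Levi'_right_inverse[OF s] by blast
  have "x * s * s' = x"
    using assoc_mult_mat[OF x Levi'_carrier[OF s] Levi'_carrier[OF s'(1)]] s'(2) x by simp
  then show ?thesis using Levi'_mult[OF xs s'(1)] by simp
qed

lemma Uni_Levi: "A \<in> Uni ns n \<Longrightarrow> A \<in> Levi ns n"
  by (simp add: Uni_def)

lemma Uni_carrier: "A \<in> Uni ns n \<Longrightarrow> A \<in> carrier_mat n n"
  by (simp add: Uni_def Levi_def)

lemma Uni_diag: "A \<in> Uni ns n \<Longrightarrow> i < n \<Longrightarrow> A $$ (i,i) = 1"
  by (simp add: Uni_def)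

lemma Uni_lower: "A \<in> Uni ns n \<Longrightarrow> i < n \<Longrightarrow> j < i \<Longrightarrow> A $$ (i,j) = 0"
  by (simp add: Uni_def)

lemma det_unitriangular:
  assumes A: "A \<in> carrier_mat n n" and "\<And>i. i < n \<Longrightarrow> A $$ (i,i) = 1"
    and "\<And>i j. i < n \<Longrightarrow> j < i \<Longrightarrow> A $$ (i,j) = 0"
  shows "det A = 1"
proof -
  have "det A = prod_list (diag_mat A)"
    by (rule det_upper_triangular[OF _ A]) (use assms in \<open>auto simp: upper_triangular_def\<close>)
  also have "diag_mat A = map (\<lambda>_. 1) [0..<n]"
    using assms by (simp add: diag_mat_def)
  finally show ?thesis by (simp add: map_replicate_const)
qed

lemma UniI:
  assumes "A \<in> carrier_mat n n" and "\<And>i. i < n \<Longrightarrow> A $$ (i,i) = 1"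
    and "\<And>i j. i < n \<Longrightarrow> j < i \<Longrightarrow> A $$ (i,j) = 0"
    and "\<And>i j. i < n \<Longrightarrow> j < n \<Longrightarrow> blk ns i \<noteq> blk ns j \<Longrightarrow> A $$ (i,j) = 0"
  shows "A \<in> Uni ns n"
  using assms det_unitriangular[of A n] by (simp add: Uni_def Levi_def)

lemma Uni_det: "A \<in> Uni ns n \<Longrightarrow> det A = 1"
  unfolding Uni_def Levi_def by (auto intro: det_unitriangular)

lemma Uni_mult:
  assumes A: "A \<in> Uni ns n" and B: "B \<in> Uni ns n"
  shows "A * B \<in> Uni ns n"
proof (rule UniI)
  have cA: "A \<in> carrier_mat n n" and cB: "B \<in> carrier_mat n n"
    using A B by (simp_all add: Uni_carrier)
  then show "A * B \<in> carrier_mat n n" by simp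
  have lower_part: "(A * B) $$ (i,j) = B $$ (i,j)" if "i < n" "j \<le> i" for i j
  proof -
    have "A $$ (i,l) * B $$ (l,j) = (if l = i then B $$ (i,j) else 0)" if "l < n" for l
      using Uni_diag[OF A, of i] Uni_lower[OF A, of i l] Uni_lower[OF B, of l j] \<open>i < n\<close> \<open>j \<le> i\<close> that
      by (cases "l < i") auto
    then show ?thesis using cA cB that by (simp add: scalar_prod_def)
  qed
  show "(A * B) $$ (i,i) = 1" if "i < n" for i
    using lower_part[OF that] Uni_diag[OF B that] by simp
  show "(A * B) $$ (i,j) = 0" if "i < n" "j < i" for i j
    using lower_part[OF that(1)] Uni_lower[OF B that] that(2) by simp
  show "(A * B) $$ (i,j) = 0" if "i < n" "j < n" "blk ns i \<noteq> blk ns j" for i j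
    using Levi_off_block[OF Levi_mult[OF Uni_Levi[OF A] Uni_Levi[OF B]] that] .
qed

lemma one_Uni: "1\<^sub>m n \<in> Uni ns n"
  by (rule UniI) auto

lemma Uni_Levi': "A \<in> Uni ns n \<Longrightarrow> A \<in> Levi' ns n"
  by (simp add: Levi'_def Uni_det Uni_Levi)

lemma addrow_mat_Uni:
  assumes "i < j" "j < n" "blk ns i = blk ns j"
  shows "addrow_mat n a i j \<in> Uni ns n"
  by (rule UniI) (use assms in auto)

lemma rootmat_Uni: "Suc i < n \<Longrightarrow> blk ns i = blk ns (Suc i) \<Longrightarrow> rootmat n i a \<in> Uni ns n"
  unfolding rootmat_eq_addrow_mat by (rule addrow_mat_Uni) auto

lemma addrow_mat_Levi':
  assumes "i \<noteq> j" "i < n" "j < n" "blk ns i = blk ns j"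
  shows "addrow_mat n a i j \<in> Levi' ns n"
  using assms det_addrow_mat[of i j n a] by (auto simp: Levi'_def Levi_def)

lemma Tor_Levi: "e \<in> Tor ns n \<Longrightarrow> e \<in> Levi ns n"
  by (simp add: Tor_def)

lemma Tor_carrier: "e \<in> Tor ns n \<Longrightarrow> e \<in> carrier_mat n n"
  by (simp add: Tor_def Levi_def)

lemma Tor_eq_mat_diag: "e \<in> Tor ns n \<Longrightarrow> e = mat_diag n (\<lambda>i. e $$ (i,i))"
  by (rule eq_matI) (auto simp: Tor_def Levi_def)

lemma Tor_diag_neq_0:
  assumes "e \<in> Tor ns n" "i < n"
  shows "e $$ (i,i) \<noteq> 0"
proof -
  have "(\<Prod>i<n. e $$ (i,i)) \<noteq> 0"
    using Levi_det[OF Tor_Levi[OF assms(1)]] Tor_eq_mat_diag[OF assms(1)] by (metis det_mat_diag)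
  then show ?thesis using assms(2) by simp
qed

lemma mat_diag_Tor: "(\<And>i. i < n \<Longrightarrow> d i \<noteq> 0) \<Longrightarrow> mat_diag n d \<in> Tor ns n"
  by (auto simp: Tor_def Levi_def det_mat_diag)

lemma Tor_mult_eq:
  assumes "e \<in> Tor ns n" "f \<in> Tor ns n"
  shows "e * f = mat_diag n (\<lambda>i. e $$ (i,i) * f $$ (i,i))"
proof -
  have "e * f = mat_diag n (\<lambda>i. e $$ (i,i)) * mat_diag n (\<lambda>i. f $$ (i,i))"
    using Tor_eq_mat_diag assms by metis
  then show ?thesis by simp
qed

lemma Tor_mult: "e \<in> Tor ns n \<Longrightarrow> f \<in> Tor ns n \<Longrightarrow> e * f \<in> Tor ns n"
  by (simp add: Tor_mult_eq mat_diag_Tor Tor_diag_neq_0)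

lemma Tor'_iff: "t \<in> Tor' ns n \<longleftrightarrow> t \<in> Tor ns n \<and> det t = 1"
  by (auto simp: Tor'_def Levi'_def Tor_Levi)

lemma det_Levi_eq_det_Tor:
  assumes "y \<in> Levi ns n"
  shows "\<exists>e\<in>Tor ns n. det e = det y"
proof (cases n)
  case 0
  then have "det y = det (1\<^sub>m n)" using Levi_carrier[OF assms] by simp
  moreover have "1\<^sub>m n \<in> Tor ns n" using mat_diag_Tor[of n "\<lambda>_. 1" ns] by simp
  ultimately show ?thesis by metis
next
  case (Suc m)
  let ?e = "mat_diag n (\<lambda>i. if i = 0 then det y else 1)"
  have "?e \<in> Tor ns n" by (rule mat_diag_Tor) (simp add: Levi_det[OF assms])
  moreover have "det ?e = det y"
    by (simp add: det_mat_diag Suc prod.lessThan_Suc_shift del: prod.lessThan_Suc)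
  ultimately show ?thesis by blast
qed

definition diag_inv :: "nat \<Rightarrow> 'a::field mat \<Rightarrow> 'a mat" where
  "diag_inv n e = mat_diag n (\<lambda>i. inverse (e $$ (i,i)))"

lemma diag_inv_carrier [simp]: "diag_inv n e \<in> carrier_mat n n"
  by (simp add: diag_inv_def)

lemma dim_diag_inv [simp]: "dim_row (diag_inv n e) = n" "dim_col (diag_inv n e) = n"
  by (simp_all add: diag_inv_def)

lemma diag_inv_Tor: "e \<in> Tor ns n \<Longrightarrow> diag_inv n e \<in> Tor ns n"
  by (simp add: diag_inv_def mat_diag_Tor Tor_diag_neq_0)

lemma diag_inv_index: "i < n \<Longrightarrow> diag_inv n e $$ (i,i) = inverse (e $$ (i,i))"
  by (simp add: diag_inv_def)

lemma Tor_mult_diag_inv: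
  assumes "e \<in> Tor ns n"
  shows "e * diag_inv n e = 1\<^sub>m n" and "diag_inv n e * e = 1\<^sub>m n"
  using assms Tor_carrier[OF assms]
  by (auto intro!: eq_matI simp: Tor_mult_eq[OF assms diag_inv_Tor[OF assms]]
      Tor_mult_eq[OF diag_inv_Tor[OF assms] assms] Tor_diag_neq_0 diag_inv_index)

lemma diag_inv_diag_inv: "e \<in> Tor ns n \<Longrightarrow> diag_inv n (diag_inv n e) = e"
  by (rule eq_matI) (auto simp: diag_inv_def Tor_def Levi_def)

lemma diag_inv_mult:
  assumes "e \<in> Tor ns n" "f \<in> Tor ns n"
  shows "diag_inv n (e * f) = diag_inv n f * diag_inv n e"
  using assms by (auto intro!: eq_matI simp: Tor_mult_eq diag_inv_Tor diag_inv_def)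

lemma det_diag_inv:
  assumes "e \<in> Tor ns n"
  shows "det (diag_inv n e) * det e = 1"
proof -
  have "det (diag_inv n e) * det e = det (diag_inv n e * e)"
    by (rule det_mult[OF diag_inv_carrier Tor_carrier[OF assms], symmetric])
  also have "\<dots> = 1" by (simp add: Tor_mult_diag_inv(2)[OF assms])
  finally show ?thesis .
qed

lemma Tor_cancel:
  assumes e: "e \<in> Tor ns n" and "dim_row X = n"
  shows "e * (diag_inv n e * X) = X" and "diag_inv n e * (e * X) = X"
proof -
  have X: "X \<in> carrier_mat n (dim_col X)" using assms(2) by (intro carrier_matI) simp_all
  have "e * (diag_inv n e * X) = (e * diag_inv n e) * X"
    by (rule assoc_mult_mat[OF Tor_carrier[OF e] diag_inv_carrier X, symmetric])
  also have "\<dots> = X" using Tor_mult_diag_inv(1)[OF e] left_mult_one_mat[OF X] by simp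
  finally show "e * (diag_inv n e * X) = X" .
  have "diag_inv n e * (e * X) = (diag_inv n e * e) * X"
    by (rule assoc_mult_mat[OF diag_inv_carrier Tor_carrier[OF e] X, symmetric])
  also have "\<dots> = X" using Tor_mult_diag_inv(2)[OF e] left_mult_one_mat[OF X] by simp
  finally show "diag_inv n e * (e * X) = X" .
qed

lemma Tor_inverse_unique:
  assumes "t \<in> Tor ns n" "t' \<in> Tor ns n" "t' * t = 1\<^sub>m n"
  shows "t = diag_inv n t'"
proof -
  have "t = diag_inv n t' * (t' * t)"
    using Tor_cancel(2)[OF assms(2)] carrier_matD(1)[OF Tor_carrier[OF assms(1)]] by simp
  then show ?thesis using assms(3) right_mult_one_mat[OF diag_inv_carrier] by simp
qed

lemma Tor_off_diag: "e \<in> Tor ns n \<Longrightarrow> i < n \<Longrightarrow> j < n \<Longrightarrow> i \<noteq> j \<Longrightarrow> e $$ (i,j) = 0"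
  by (simp add: Tor_def)

lemma Tor_mult_index:
  assumes e: "e \<in> Tor ns n" and A: "A \<in> carrier_mat n m" and "i < n" "j < m"
  shows "(e * A) $$ (i,j) = e $$ (i,i) * A $$ (i,j)"
proof -
  have "(\<Sum>l\<in>{0..<n}. e $$ (i,l) * A $$ (l,j)) = (\<Sum>l\<in>{0..<n}. if l = i then e $$ (i,i) * A $$ (i,j) else 0)"
    by (rule sum.cong) (auto simp: Tor_off_diag[OF e \<open>i < n\<close>])
  also have "\<dots> = e $$ (i,i) * A $$ (i,j)" using \<open>i < n\<close> by simp
  finally show ?thesis using Tor_carrier[OF e] A assms(3,4) by (simp add: scalar_prod_def)
qed

lemma mult_Tor_index:
  assumes e: "e \<in> Tor ns n" and A: "A \<in> carrier_mat m n" and "i < m" "j < n"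
  shows "(A * e) $$ (i,j) = A $$ (i,j) * e $$ (j,j)"
proof -
  have "(\<Sum>l\<in>{0..<n}. A $$ (i,l) * e $$ (l,j)) = (\<Sum>l\<in>{0..<n}. if l = j then A $$ (i,j) * e $$ (j,j) else 0)"
    by (rule sum.cong) (auto simp: Tor_off_diag[OF e _ \<open>j < n\<close>])
  also have "\<dots> = A $$ (i,j) * e $$ (j,j)" using \<open>j < n\<close> by simp
  finally show ?thesis using Tor_carrier[OF e] A assms(3,4) by (simp add: scalar_prod_def)
qed

lemma Tor_conj_index:
  assumes e: "e \<in> Tor ns n" and A: "A \<in> carrier_mat n n" and "i < n" "j < n"
  shows "(e * A * diag_inv n e) $$ (i,j) = e $$ (i,i) * A $$ (i,j) / e $$ (j,j)"
proof -
  have eA: "e * A \<in> carrier_mat n n" by (rule mult_carrier_mat[OF Tor_carrier[OF e] A])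
  have "(e * A * diag_inv n e) $$ (i,j) = (e * A) $$ (i,j) * diag_inv n e $$ (j,j)"
    by (rule mult_Tor_index[OF diag_inv_Tor[OF e] eA assms(3,4)])
  also have "\<dots> = e $$ (i,i) * A $$ (i,j) * inverse (e $$ (j,j))"
    by (simp only: Tor_mult_index[OF e A assms(3,4)] diag_inv_index[OF assms(4)])
  also have "\<dots> = e $$ (i,i) * A $$ (i,j) / e $$ (j,j)" by (rule divide_inverse[symmetric])
  finally show ?thesis .
qed

lemma Tor_conj_carrier:
  assumes "e \<in> Tor ns n"
  shows "e * A * diag_inv n e \<in> carrier_mat n n"
  using carrier_matD[OF Tor_carrier[OF assms]] by (intro carrier_matI) simp_all

lemma Tor_conj_Uni:
  assumes e: "e \<in> Tor ns n" and u: "u \<in> Uni ns n"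
  shows "e * u * diag_inv n e \<in> Uni ns n"
  using Tor_diag_neq_0[OF e] Uni_diag[OF u] Uni_lower[OF u] Levi_off_block[OF Uni_Levi[OF u]]
  by (intro UniI) (simp_all add: Tor_conj_index[OF e Uni_carrier[OF u]] Tor_conj_carrier[OF e])

lemma Tor_conj_rootmat:
  assumes e: "e \<in> Tor ns n" and "Suc i < n"
  shows "e * rootmat n i a * diag_inv n e = rootmat n i (e $$ (i,i) * a / e $$ (Suc i, Suc i))"
proof (rule eq_matI)
  fix r c assume rc: "r < dim_row (rootmat n i (e $$ (i,i) * a / e $$ (Suc i, Suc i)))"
    "c < dim_col (rootmat n i (e $$ (i,i) * a / e $$ (Suc i, Suc i)))"
  have "rootmat n i a \<in> carrier_mat n n" by (simp add: rootmat_eq_addrow_mat)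
  with rc show "(e * rootmat n i a * diag_inv n e) $$ (r,c) = rootmat n i (e $$ (i,i) * a / e $$ (Suc i, Suc i)) $$ (r,c)"
    using assms Tor_diag_neq_0[OF e] by (auto simp: Tor_conj_index[OF e] rootmat_eq_addrow_mat)
qed (use Tor_carrier[OF e] in \<open>simp_all add: rootmat_eq_addrow_mat\<close>)

lemma Tor_conj_mult:
  assumes e: "e \<in> Tor ns n" and "A \<in> carrier_mat n n" "B \<in> carrier_mat n n"
  shows "e * (A * B) * diag_inv n e = (e * A * diag_inv n e) * (e * B * diag_inv n e)"
  using carrier_matD[OF assms(2)] carrier_matD[OF assms(3)] carrier_matD[OF Tor_carrier[OF e]]
  by (simp add: assoc_mult_mat_dim Tor_cancel(2)[OF e])

lemma Tor_conj_conj: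
  assumes e: "e \<in> Tor ns n" and f: "f \<in> Tor ns n" and "A \<in> carrier_mat n n"
  shows "(e * f) * A * diag_inv n (e * f) = e * (f * A * diag_inv n f) * diag_inv n e"
  using carrier_matD[OF assms(3)] carrier_matD[OF Tor_carrier[OF e]] carrier_matD[OF Tor_carrier[OF f]]
  by (simp add: diag_inv_mult[OF e f] assoc_mult_mat_dim)

lemma Tor_conj_cancel:
  assumes e: "e \<in> Tor ns n" and "A \<in> carrier_mat n n"
  shows "e * (diag_inv n e * A * e) * diag_inv n e = A"
  using carrier_matD[OF assms(2)] carrier_matD[OF Tor_carrier[OF e]]
  by (simp add: assoc_mult_mat_dim Tor_cancel(1)[OF e] Tor_mult_diag_inv(1)[OF e] right_mult_one_mat[OF assms(2)])

section \<open>Additive characters of a finite field\<close>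

lemma of_nat_witt_neq_0:
  assumes "witt_alg_closed l TYPE('w::idom)" and "\<not> l dvd q"
  shows "(of_nat q :: 'w) \<noteq> 0"
proof
  assume q: "(of_nat q :: 'w) = 0"
  have "prime l" and l_nonunit: "\<not> (of_nat l :: 'w) dvd 1"
    using assms(1) by (auto simp: witt_alg_closed_def)
  then have "coprime (int l) (int q)"
    using prime_imp_coprime[OF _ assms(2)] by simp
  then obtain u v where "u * int l + v * int q = 1"
    using bezout_int[of "int l" "int q"] by (auto simp: coprime_iff_gcd_eq_1)
  then have "(of_int u * of_nat l :: 'w) = 1"
    using q by (metis add.right_neutral mult_zero_right of_int_hom.hom_add of_int_hom.hom_mult
        of_int_hom.hom_one of_int_of_nat_eq)
  then show False using l_nonunit by (metis dvd_triv_right)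
qed

lemma additive_char_sum:
  fixes \<chi> :: "'f::{finite,field} \<Rightarrow> 'w::idom"
  assumes add: "\<forall>a b. \<chi> (a + b) = \<chi> a * \<chi> b" and nontriv: "\<chi> b \<noteq> 1"
  shows "(\<Sum>a\<in>UNIV. \<chi> a) = 0"
proof -
  let ?S = "\<Sum>a\<in>UNIV. \<chi> a"
  have "?S = (\<Sum>a\<in>UNIV. \<chi> (a + b))"
    by (rule sum.reindex_bij_witness[of _ "\<lambda>a. a + b" "\<lambda>a. a - b"]) auto
  also have "\<dots> = \<chi> b * ?S"
    using add by (simp add: sum_distrib_left mult.commute)
  finally have "(\<chi> b - 1) * ?S = 0" by (simp add: algebra_simps)
  then show ?thesis using nontriv by simp
qed

lemma additive_char_dilation_sum:
  fixes \<psi> :: "'f::{finite,field} \<Rightarrow> 'w::idom"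
  assumes add: "\<forall>a b. \<psi> (a + b) = \<psi> a * \<psi> b" and "\<psi> 0 = 1" and "\<psi> b \<noteq> 1"
  shows "(\<Sum>c\<in>UNIV. \<psi> (c * a)) = (if a = 0 then of_nat (card (UNIV :: 'f set)) else 0)"
proof (cases "a = 0")
  case False
  have "(\<Sum>c\<in>UNIV. \<psi> (c * a)) = 0"
  proof (rule additive_char_sum[of _ "b / a"])
    show "\<forall>x y. \<psi> ((x + y) * a) = \<psi> (x * a) * \<psi> (y * a)"
      using add by (simp add: distrib_right)
    show "\<psi> (b / a * a) \<noteq> 1" using assms(3) False by simp
  qed
  then show ?thesis using False by simp
qed (simp add: assms(2))

text \<open>Orthogonality: the double sum of \<open>\<psi>(c a) \<phi>(-a)\<close> is \<open>q \<noteq> 0\<close>, so for some \<open>c\<close> the character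
  \<open>a \<mapsto> \<psi>(c a) \<phi>(-a)\<close> has nonzero sum and hence is trivial.\<close>
lemma additive_char_eq_dilation:
  fixes \<psi> \<phi> :: "'f::{finite,field} \<Rightarrow> 'w::idom"
  assumes add_\<psi>: "\<forall>a b. \<psi> (a + b) = \<psi> a * \<psi> b" and add_\<phi>: "\<forall>a b. \<phi> (a + b) = \<phi> a * \<phi> b"
    and "\<psi> 0 = 1" and "\<phi> 0 = 1" and "\<psi> b \<noteq> 1" and "\<phi> b' \<noteq> 1"
    and q: "(of_nat (card (UNIV :: 'f set)) :: 'w) \<noteq> 0"
  shows "\<exists>c. c \<noteq> 0 \<and> (\<forall>a. \<phi> a = \<psi> (c * a))"
proof -
  let ?\<chi> = "\<lambda>c a. \<psi> (c * a) * \<phi> (- a)"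
  have "(\<Sum>c\<in>UNIV. \<Sum>a\<in>UNIV. ?\<chi> c a) = (\<Sum>a\<in>UNIV. \<phi> (- a) * (\<Sum>c\<in>UNIV. \<psi> (c * a)))"
    by (subst sum.swap) (simp add: sum_distrib_left mult.commute)
  also have "\<dots> = (\<Sum>a::'f\<in>UNIV. if a = 0 then of_nat (card (UNIV :: 'f set)) else 0)"
    by (rule sum.cong) (simp_all add: additive_char_dilation_sum[OF add_\<psi> assms(3,5)] assms(4))
  also have "\<dots> = of_nat (card (UNIV :: 'f set))"
    by (simp only: sum.delta[OF finite_UNIV] UNIV_I if_True)
  finally have "(\<Sum>c\<in>UNIV. \<Sum>a\<in>UNIV. ?\<chi> c a) \<noteq> 0"
    using q by (simp only: not_False_eq_True)
  then obtain c where c: "(\<Sum>a\<in>UNIV. ?\<chi> c a) \<noteq> 0"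
    by (rule sum.not_neutral_contains_not_neutral)
  have \<chi>_add: "\<forall>x y. ?\<chi> c (x + y) = ?\<chi> c x * ?\<chi> c y"
  proof (intro allI)
    fix x y
    have "\<psi> (c * (x + y)) = \<psi> (c * x) * \<psi> (c * y)"
      using add_\<psi> by (simp add: distrib_left)
    moreover have "\<phi> (- (x + y)) = \<phi> (- x) * \<phi> (- y)"
      using add_\<phi>[rule_format, of "- x" "- y"] by simp
    ultimately show "?\<chi> c (x + y) = ?\<chi> c x * ?\<chi> c y" by (simp add: ac_simps)
  qed
  have \<phi>_inv: "\<phi> a * \<phi> (- a) = 1" for a
  proof -
    have "\<phi> a * \<phi> (- a) = \<phi> (a + - a)" using add_\<phi> by (simp only:)
    also have "\<dots> = 1" using assms(4) by simp
    finally show ?thesis .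
  qed
  have eq: "\<phi> a = \<psi> (c * a)" for a
  proof -
    have "?\<chi> c a = 1" using additive_char_sum[OF \<chi>_add] c by blast
    then have "\<phi> a = \<phi> a * (\<psi> (c * a) * \<phi> (- a))" by simp
    also have "\<dots> = \<psi> (c * a) * (\<phi> a * \<phi> (- a))" by (simp only: ac_simps)
    also have "\<dots> = \<psi> (c * a)" by (simp add: \<phi>_inv)
    finally show ?thesis .
  qed
  moreover have "c \<noteq> 0" using eq[of b'] assms(3,6) by auto
  ultimately show ?thesis by blast
qed

section \<open>Characters of U\<close>

definition offdiag_support :: "nat \<Rightarrow> 'a::zero mat \<Rightarrow> (nat \<times> nat) set" where
  "offdiag_support n u = {(r,c). r < n \<and> c < n \<and> r \<noteq> c \<and> u $$ (r,c) \<noteq> 0}"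

lemma finite_offdiag_support: "finite (offdiag_support n u)"
  by (rule finite_subset[of _ "{..<n} \<times> {..<n}"]) (auto simp: offdiag_support_def)

text \<open>Clearing the entry \<open>(i,j)\<close> of \<open>u\<close> whose column \<open>j\<close> is rightmost in the support: row \<open>j\<close>
  of \<open>u\<close> is then the unit row, so the row operation touches no other entry.\<close>
lemma Uni_eq_addrow_mat_mult:
  assumes u: "u \<in> Uni ns n" and supp: "offdiag_support n u \<noteq> {}"
  obtains i j b u' where "i < j" "j < n" "blk ns i = blk ns j" "u' \<in> Uni ns n"
    "card (offdiag_support n u') < card (offdiag_support n u)" "u = addrow_mat n b i j * u'"
proof -
  have cu: "u \<in> carrier_mat n n" using Uni_carrier[OF u] .
  define j where "j = Max (snd ` offdiag_support n u)"
  have "j \<in> snd ` offdiag_support n u"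
    unfolding j_def using supp finite_offdiag_support by (intro Max_in) auto
  then obtain i where ij: "(i,j) \<in> offdiag_support n u" by auto
  have j_max: "c \<le> j" if "(r,c) \<in> offdiag_support n u" for r c
    unfolding j_def using that finite_offdiag_support by (intro Max_ge) force+
  have i: "i < n" "j < n" "i \<noteq> j" "u $$ (i,j) \<noteq> 0" using ij by (auto simp: offdiag_support_def)
  have "i < j" using i Uni_lower[OF u, of i j] by (cases "j < i") auto
  have blocks: "blk ns i = blk ns j" using i Levi_off_block[OF Uni_Levi[OF u], of i j] by auto
  have row_j: "u $$ (j,c) = (if c = j then 1 else 0)" if "c < n" for c
    using Uni_lower[OF u, of j c] Uni_diag[OF u, of j] j_max[of j c] that i
    by (cases c j rule: linorder_cases) (auto simp: offdiag_support_def)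
  define b where "b = u $$ (i,j)"
  define u' where "u' = addrow_mat n (- b) i j * u"
  have root_Uni: "addrow_mat n a i j \<in> Uni ns n" for a
    using \<open>i < j\<close> i blocks by (intro addrow_mat_Uni) auto
  have u'_Uni: "u' \<in> Uni ns n" unfolding u'_def using Uni_mult[OF root_Uni u] .
  have u'_index: "u' $$ (r,c) = (if r = i \<and> c = j then 0 else u $$ (r,c))" if "r < n" "c < n" for r c
    unfolding u'_def b_def using that cu i row_j by (simp add: addrow_mat_mult)
  have "offdiag_support n u' = offdiag_support n u - {(i,j)}"
    unfolding offdiag_support_def by (auto simp: u'_index split: if_splits)
  then have "card (offdiag_support n u') < card (offdiag_support n u)"
    using card_Diff1_less[OF finite_offdiag_support ij] by simp
  moreover have "u = addrow_mat n b i j * u'"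
    using cu carrier_matD[OF Uni_carrier[OF u'_Uni]] i row_j
    by (intro eq_matI) (auto simp: addrow_mat_mult u'_index b_def)
  ultimately show ?thesis using that \<open>i < j\<close> i(2) blocks u'_Uni by blast
qed

lemma Uni_induct [consumes 1, case_names one root]:
  assumes "u \<in> Uni ns n" and one: "P (1\<^sub>m n)"
    and root: "\<And>u i j a. u \<in> Uni ns n \<Longrightarrow> P u \<Longrightarrow> i < j \<Longrightarrow> j < n \<Longrightarrow> blk ns i = blk ns j
      \<Longrightarrow> P (addrow_mat n a i j * u)"
  shows "P u"
  using assms(1)
proof (induction "card (offdiag_support n u)" arbitrary: u rule: less_induct)
  case less
  show ?case
  proof (cases "offdiag_support n u = {}")
    case True
    have "u = 1\<^sub>m n"
      using True Uni_carrier[OF less.prems] Uni_diag[OF less.prems]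
      by (intro eq_matI) (auto simp: offdiag_support_def)
    then show ?thesis using one by simp
  next
    case False
    then show ?thesis
      by (rule Uni_eq_addrow_mat_mult[OF less.prems]) (metis less.hyps root)
  qed
qed

lemma Uni_char_eq_mult:
  assumes "\<forall>u\<in>Uni ns n. \<forall>v\<in>Uni ns n. \<mu> (u * v) = \<mu> u * \<mu> v"
    and "\<forall>u\<in>Uni ns n. \<forall>v\<in>Uni ns n. \<nu> (u * v) = \<nu> u * \<nu> v"
    and "v \<in> Uni ns n" "w \<in> Uni ns n" "\<mu> v = \<nu> v" "\<mu> w = \<nu> w"
  shows "\<mu> (v * w) = \<nu> (v * w)"
  using assms by simp

text \<open>The non-simple root subgroups are reached by commutators of simple ones.\<close>
lemma Uni_char_eq_root:
  fixes \<mu> \<nu> :: "'f::field mat \<Rightarrow> 'w::comm_monoid_mult"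
  assumes hom_\<mu>: "\<forall>u\<in>Uni ns n. \<forall>v\<in>Uni ns n. \<mu> (u * v) = \<mu> u * \<mu> v"
    and hom_\<nu>: "\<forall>u\<in>Uni ns n. \<forall>v\<in>Uni ns n. \<nu> (u * v) = \<nu> u * \<nu> v"
    and simple: "\<And>i a. Suc i < n \<Longrightarrow> blk ns i = blk ns (Suc i) \<Longrightarrow> \<mu> (rootmat n i a) = \<nu> (rootmat n i a)"
    and "i + Suc d < n" "blk ns i = blk ns (i + Suc d)"
  shows "\<mu> (addrow_mat n a i (i + Suc d)) = \<nu> (addrow_mat n a i (i + Suc d))"
  using assms(4,5)
proof (induction d arbitrary: i a)
  case 0
  then show ?case using simple[of i a] by (simp add: rootmat_eq_addrow_mat)
next
  case (Suc d)
  define j where "j = Suc i + Suc d"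
  have blocks: "blk ns (Suc i) = blk ns i" "blk ns j = blk ns i"
    using Suc.prems blk_between[of i "Suc i" j ns] by (simp_all add: j_def)
  have x: "addrow_mat n b i (Suc i) \<in> Uni ns n" "\<mu> (addrow_mat n b i (Suc i)) = \<nu> (addrow_mat n b i (Suc i))"
    for b using Suc.prems blocks simple[of i b]
    by (auto simp: j_def rootmat_eq_addrow_mat intro!: addrow_mat_Uni)
  have y: "addrow_mat n b (Suc i) j \<in> Uni ns n" "\<mu> (addrow_mat n b (Suc i) j) = \<nu> (addrow_mat n b (Suc i) j)"
    for b using Suc.prems blocks Suc.IH[of "Suc i" b]
    by (auto simp: j_def intro!: addrow_mat_Uni)
  have "addrow_mat n a i (i + Suc (Suc d)) = addrow_mat n a i (Suc i) * addrow_mat n 1 (Suc i) j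
      * addrow_mat n (- a) i (Suc i) * addrow_mat n (- 1) (Suc i) j"
    using addrow_mat_commutator[of i "Suc i" j n a 1] Suc.prems by (simp add: j_def)
  then show ?case
    using x y by (simp add: Uni_char_eq_mult[OF hom_\<mu> hom_\<nu>] Uni_mult)
qed

lemma Uni_char_eqI:
  fixes \<mu> \<nu> :: "'f::field mat \<Rightarrow> 'w::comm_monoid_mult"
  assumes hom_\<mu>: "\<forall>u\<in>Uni ns n. \<forall>v\<in>Uni ns n. \<mu> (u * v) = \<mu> u * \<mu> v"
    and hom_\<nu>: "\<forall>u\<in>Uni ns n. \<forall>v\<in>Uni ns n. \<nu> (u * v) = \<nu> u * \<nu> v"
    and one: "\<mu> (1\<^sub>m n) = \<nu> (1\<^sub>m n)"
    and simple: "\<And>i a. Suc i < n \<Longrightarrow> blk ns i = blk ns (Suc i) \<Longrightarrow> \<mu> (rootmat n i a) = \<nu> (rootmat n i a)"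
    and u: "u \<in> Uni ns n"
  shows "\<mu> u = \<nu> u"
  using u
proof (induction rule: Uni_induct)
  case one
  then show ?case by (rule assms(3))
next
  case (root v i j a)
  then obtain d where d: "j = i + Suc d" using less_iff_Suc_add by auto
  have "addrow_mat n a i j \<in> Uni ns n" using root(2-4) by (rule addrow_mat_Uni)
  moreover have "\<mu> (addrow_mat n a i j) = \<nu> (addrow_mat n a i j)"
    using Uni_char_eq_root[OF hom_\<mu> hom_\<nu> simple, of i d a] root(3,4) d by simp
  ultimately show ?case using Uni_char_eq_mult[OF hom_\<mu> hom_\<nu>] root(1,5) by blast
qed

lemma nondeg_chars_unit: "\<mu> \<in> nondeg_chars ns n \<Longrightarrow> u \<in> Uni ns n \<Longrightarrow> \<mu> u dvd 1"
  by (simp add: nondeg_chars_def)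

lemma nondeg_chars_hom:
  "\<mu> \<in> nondeg_chars ns n \<Longrightarrow> \<forall>u\<in>Uni ns n. \<forall>v\<in>Uni ns n. \<mu> (u * v) = \<mu> u * \<mu> v"
  by (simp add: nondeg_chars_def)

lemma nondeg_chars_nontrivial:
  "\<mu> \<in> nondeg_chars ns n \<Longrightarrow> Suc i < n \<Longrightarrow> blk ns i = blk ns (Suc i) \<Longrightarrow> \<exists>a. \<mu> (rootmat n i a) \<noteq> 1"
  by (simp add: nondeg_chars_def)

lemma nondeg_chars_one:
  assumes "\<mu> \<in> nondeg_chars ns n"
  shows "\<mu> (1\<^sub>m n) = 1"
proof -
  have "\<mu> (1\<^sub>m n * 1\<^sub>m n) = \<mu> (1\<^sub>m n) * \<mu> (1\<^sub>m n)"
    using nondeg_chars_hom[OF assms] one_Uni[of n ns] by blast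
  then have "\<mu> (1\<^sub>m n) * \<mu> (1\<^sub>m n) = \<mu> (1\<^sub>m n) * 1"
    by (simp add: left_mult_one_mat[OF one_carrier_mat])
  moreover have "\<mu> (1\<^sub>m n) \<noteq> 0"
    using nondeg_chars_unit[OF assms one_Uni] by auto
  ultimately show ?thesis by simp
qed

lemma nondeg_chars_root_additive:
  assumes \<mu>: "\<mu> \<in> nondeg_chars ns n" and i: "Suc i < n" "blk ns i = blk ns (Suc i)"
  shows "\<forall>a b. \<mu> (rootmat n i (a + b)) = \<mu> (rootmat n i a) * \<mu> (rootmat n i b)"
    and "\<mu> (rootmat n i 0) = 1"
proof -
  show "\<forall>a b. \<mu> (rootmat n i (a + b)) = \<mu> (rootmat n i a) * \<mu> (rootmat n i b)"
  proof (intro allI)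
    fix a b
    have "\<mu> (rootmat n i a * rootmat n i b) = \<mu> (rootmat n i a) * \<mu> (rootmat n i b)"
      using nondeg_chars_hom[OF \<mu>] rootmat_Uni[OF i] by blast
    moreover have "rootmat n i a * rootmat n i b = rootmat n i (a + b)"
      using i(1) by (simp add: rootmat_eq_addrow_mat addrow_mat_add)
    ultimately show "\<mu> (rootmat n i (a + b)) = \<mu> (rootmat n i a) * \<mu> (rootmat n i b)" by simp
  qed
  show "\<mu> (rootmat n i 0) = 1"
    using nondeg_chars_one[OF \<mu>] by (simp add: rootmat_eq_addrow_mat addrow_mat_zero)
qed

lemma nondeg_chars_dilation_invariant:
  assumes \<mu>: "\<mu> \<in> nondeg_chars ns n" and i: "Suc i < n" "blk ns i = blk ns (Suc i)"
    and invariant: "\<And>a. \<mu> (rootmat n i (r * a)) = \<mu> (rootmat n i a)"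
  shows "r = 1"
proof (rule ccontr)
  assume "r \<noteq> 1"
  let ?\<psi> = "\<lambda>a. \<mu> (rootmat n i a)"
  have trivial: "?\<psi> ((r - 1) * a) = 1" for a
  proof -
    have "?\<psi> ((r - 1) * a) * ?\<psi> a = ?\<psi> ((r - 1) * a + a)"
      using nondeg_chars_root_additive(1)[OF \<mu> i] by (simp only:)
    also have "(r - 1) * a + a = r * a" by (simp add: algebra_simps)
    finally have "?\<psi> ((r - 1) * a) * ?\<psi> a = ?\<psi> a" using invariant by simp
    moreover have "?\<psi> a \<noteq> 0"
      using nondeg_chars_unit[OF \<mu> rootmat_Uni[OF i, of a]] by auto
    ultimately show ?thesis by simp
  qed
  obtain b where "?\<psi> b \<noteq> 1" using nondeg_chars_nontrivial[OF \<mu> i] by blast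
  moreover have "(r - 1) * (b / (r - 1)) = b" using \<open>r \<noteq> 1\<close> by simp
  ultimately show False using trivial[of "b / (r - 1)"] by simp
qed

section \<open>The torus action on non-degenerate characters\<close>

definition twist :: "nat \<Rightarrow> 'f::field mat \<Rightarrow> ('f mat \<Rightarrow> 'w) \<Rightarrow> 'f mat \<Rightarrow> 'w" where
  "twist n e \<mu> u = \<mu> (e * u * diag_inv n e)"

lemma twist_rootmat:
  "e \<in> Tor ns n \<Longrightarrow> Suc i < n
    \<Longrightarrow> twist n e \<mu> (rootmat n i a) = \<mu> (rootmat n i (e $$ (i,i) * a / e $$ (Suc i, Suc i)))"
  by (simp add: twist_def Tor_conj_rootmat)

lemma twist_twist:
  assumes "e \<in> Tor ns n" "f \<in> Tor ns n" "u \<in> carrier_mat n n"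
  shows "twist n e (twist n f \<mu>) u = twist n (f * e) \<mu> u"
  using Tor_conj_conj[OF assms(2,1,3)] by (simp add: twist_def)

lemma twist_one: "u \<in> carrier_mat n n \<Longrightarrow> twist n (1\<^sub>m n) \<mu> u = \<mu> u"
proof -
  have "diag_inv n (1\<^sub>m n) = (1\<^sub>m n :: 'a::field mat)"
    by (rule eq_matI) (auto simp: diag_inv_def)
  then show "u \<in> carrier_mat n n \<Longrightarrow> twist n (1\<^sub>m n) \<mu> u = \<mu> u"
    by (simp add: twist_def)
qed

lemma twist_nondeg_chars:
  fixes \<mu> :: "'f::field mat \<Rightarrow> 'w::idom"
  assumes \<mu>: "\<mu> \<in> nondeg_chars ns n" and e: "e \<in> Tor ns n"
  shows "twist n e \<mu> \<in> nondeg_chars ns n"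
  unfolding nondeg_chars_def mem_Collect_eq
proof (intro conjI ballI allI impI)
  fix u :: "'f mat" assume "u \<in> Uni ns n"
  then show "twist n e \<mu> u dvd 1"
    unfolding twist_def by (rule nondeg_chars_unit[OF \<mu> Tor_conj_Uni[OF e]])
next
  fix u v :: "'f mat" assume u: "u \<in> Uni ns n" and v: "v \<in> Uni ns n"
  show "twist n e \<mu> (u * v) = twist n e \<mu> u * twist n e \<mu> v"
    unfolding twist_def Tor_conj_mult[OF e Uni_carrier[OF u] Uni_carrier[OF v]]
    using nondeg_chars_hom[OF \<mu>] Tor_conj_Uni[OF e u] Tor_conj_Uni[OF e v] by blast
next
  fix i assume i: "Suc i < n \<and> blk ns i = blk ns (Suc i)"
  obtain a where a: "\<mu> (rootmat n i a) \<noteq> 1" using nondeg_chars_nontrivial[OF \<mu>] i by blast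
  have "twist n e \<mu> (rootmat n i (a * e $$ (Suc i, Suc i) / e $$ (i,i)))
      = \<mu> (rootmat n i (e $$ (i,i) * (a * e $$ (Suc i, Suc i) / e $$ (i,i)) / e $$ (Suc i, Suc i)))"
    using i by (simp add: twist_rootmat[OF e])
  also have "e $$ (i,i) * (a * e $$ (Suc i, Suc i) / e $$ (i,i)) / e $$ (Suc i, Suc i) = a"
    using Tor_diag_neq_0[OF e] i by simp
  finally have "twist n e \<mu> (rootmat n i (a * e $$ (Suc i, Suc i) / e $$ (i,i))) \<noteq> 1"
    using a by simp
  then show "\<exists>a. twist n e \<mu> (rootmat n i a) \<noteq> 1" by blast
qed

lemma nondeg_chars_Tor_transitive:
  fixes \<mu> \<nu> :: "'f::{finite,field} mat \<Rightarrow> 'w::idom"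
  assumes \<mu>: "\<mu> \<in> nondeg_chars ns n" and \<nu>: "\<nu> \<in> nondeg_chars ns n"
    and q: "(of_nat (card (UNIV :: 'f set)) :: 'w) \<noteq> 0"
  shows "\<exists>e\<in>Tor ns n. \<forall>u\<in>Uni ns n. \<nu> u = twist n e \<mu> u"
proof -
  have "\<exists>c. c \<noteq> 0 \<and> (Suc i < n \<and> blk ns i = blk ns (Suc i)
      \<longrightarrow> (\<forall>a. \<nu> (rootmat n i a) = \<mu> (rootmat n i (c * a))))" for i
  proof (cases "Suc i < n \<and> blk ns i = blk ns (Suc i)")
    case True
    then have i: "Suc i < n" "blk ns i = blk ns (Suc i)" by simp_all
    obtain b b' where "\<mu> (rootmat n i b) \<noteq> 1" "\<nu> (rootmat n i b') \<noteq> 1"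
      using nondeg_chars_nontrivial[OF \<mu> i] nondeg_chars_nontrivial[OF \<nu> i] by blast
    then show ?thesis
      using additive_char_eq_dilation[OF nondeg_chars_root_additive(1)[OF \<mu> i]
          nondeg_chars_root_additive(1)[OF \<nu> i] nondeg_chars_root_additive(2)[OF \<mu> i]
          nondeg_chars_root_additive(2)[OF \<nu> i] _ _ q]
      by blast
  qed (intro exI[of _ 1], auto)
  then obtain C where C: "\<And>i. C i \<noteq> 0"
    and C_dilation: "\<And>i a. Suc i < n \<Longrightarrow> blk ns i = blk ns (Suc i)
      \<Longrightarrow> \<nu> (rootmat n i a) = \<mu> (rootmat n i (C i * a))"
    by metis
  define d where "d i = (\<Prod>k<i. inverse (C k))" for i
  have d: "d i \<noteq> 0" "d i * a / d (Suc i) = C i * a" for i a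
    using C by (simp_all add: d_def field_simps)
  define e where "e = mat_diag n d"
  have e: "e \<in> Tor ns n" unfolding e_def by (rule mat_diag_Tor) (simp add: d)
  have e_diag: "e $$ (i,i) = d i" if "i < n" for i using that by (simp add: e_def)
  have "\<nu> u = twist n e \<mu> u" if "u \<in> Uni ns n" for u
  proof (rule Uni_char_eqI[OF nondeg_chars_hom[OF \<nu>] nondeg_chars_hom[OF twist_nondeg_chars[OF \<mu> e]] _ _ that])
    show "\<nu> (1\<^sub>m n) = twist n e \<mu> (1\<^sub>m n)"
      using nondeg_chars_one[OF \<nu>] nondeg_chars_one[OF twist_nondeg_chars[OF \<mu> e]] by simp
    show "\<nu> (rootmat n i a) = twist n e \<mu> (rootmat n i a)" if "Suc i < n" "blk ns i = blk ns (Suc i)" for i a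
      using that by (simp add: twist_rootmat[OF e] C_dilation e_diag d)
  qed
  with e show ?thesis by blast
qed

lemma same_orbit_iff_twist:
  "same_orbit ns n \<mu> \<nu> \<longleftrightarrow> (\<exists>t\<in>Tor ns n. det t = 1 \<and> (\<forall>u\<in>Uni ns n. \<nu> u = twist n t \<mu> u))"
proof
  assume "same_orbit ns n \<mu> \<nu>"
  then obtain t t' where "t \<in> Tor' ns n" "t' \<in> Tor' ns n" "t' * t = 1\<^sub>m n"
    and "\<forall>u\<in>Uni ns n. \<nu> u = \<mu> (t' * u * t)"
    unfolding same_orbit_def by blast
  then show "\<exists>t\<in>Tor ns n. det t = 1 \<and> (\<forall>u\<in>Uni ns n. \<nu> u = twist n t \<mu> u)"
    by (metis Tor'_iff Tor_inverse_unique twist_def)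
next
  assume "\<exists>t\<in>Tor ns n. det t = 1 \<and> (\<forall>u\<in>Uni ns n. \<nu> u = twist n t \<mu> u)"
  then obtain t where t: "t \<in> Tor ns n" "det t = 1" and twist: "\<forall>u\<in>Uni ns n. \<nu> u = twist n t \<mu> u"
    by blast
  have "diag_inv n t \<in> Tor' ns n"
    using det_diag_inv[OF t(1)] t by (simp add: Tor'_iff diag_inv_Tor)
  moreover have "t \<in> Tor' ns n" using t by (simp add: Tor'_iff)
  moreover have "t * diag_inv n t = 1\<^sub>m n" by (rule Tor_mult_diag_inv(1)[OF t(1)])
  moreover have "\<forall>u\<in>Uni ns n. \<nu> u = \<mu> (t * u * diag_inv n t)" using twist by (simp add: twist_def)
  ultimately show "same_orbit ns n \<mu> \<nu>"
    unfolding same_orbit_def by blast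
qed

section \<open>Block scalars and the centres\<close>

definition block_scalars :: "nat list \<Rightarrow> nat \<Rightarrow> 'f::field mat set" where
  "block_scalars ns n = {z \<in> Tor ns n. \<forall>i<n. \<forall>j<n. blk ns i = blk ns j \<longrightarrow> z $$ (i,i) = z $$ (j,j)}"

lemma Tor_stabilizer_block_scalars:
  assumes \<mu>: "\<mu> \<in> nondeg_chars ns n" and z: "z \<in> Tor ns n"
    and stab: "\<And>u. u \<in> Uni ns n \<Longrightarrow> twist n z \<mu> u = \<mu> u"
  shows "z \<in> block_scalars ns n"
proof -
  have "z $$ (i,i) = z $$ (Suc i, Suc i)" if i: "Suc i < n" "blk ns i = blk ns (Suc i)" for i
  proof -
    have "\<mu> (rootmat n i (z $$ (i,i) / z $$ (Suc i, Suc i) * a)) = \<mu> (rootmat n i a)" for a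
    proof -
      have "\<mu> (rootmat n i (z $$ (i,i) / z $$ (Suc i, Suc i) * a)) = twist n z \<mu> (rootmat n i a)"
        by (simp add: twist_rootmat[OF z i(1)])
      also have "\<dots> = \<mu> (rootmat n i a)" by (rule stab[OF rootmat_Uni[OF i]])
      finally show ?thesis .
    qed
    then have "z $$ (i,i) / z $$ (Suc i, Suc i) = 1"
      by (rule nondeg_chars_dilation_invariant[OF \<mu> i])
    then show ?thesis using Tor_diag_neq_0[OF z, of "Suc i"] i(1) by simp
  qed
  then show ?thesis
    using z blk_constant[of n ns "\<lambda>i. z $$ (i,i)"] unfolding block_scalars_def by blast
qed

lemma block_scalars_Tor: "z \<in> block_scalars ns n \<Longrightarrow> z \<in> Tor ns n"
  by (simp add: block_scalars_def)

lemma block_scalars_Levi: "z \<in> block_scalars ns n \<Longrightarrow> z \<in> Levi ns n"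
  by (rule Tor_Levi[OF block_scalars_Tor])

lemma block_scalars_carrier: "z \<in> block_scalars ns n \<Longrightarrow> z \<in> carrier_mat n n"
  by (rule Tor_carrier[OF block_scalars_Tor])

lemma block_scalarsI:
  assumes "z \<in> Tor ns n" and "\<And>i j. i < n \<Longrightarrow> j < n \<Longrightarrow> blk ns i = blk ns j \<Longrightarrow> z $$ (i,i) = z $$ (j,j)"
  shows "z \<in> block_scalars ns n"
  unfolding block_scalars_def using assms by blast

lemma block_scalarsD:
  "z \<in> block_scalars ns n \<Longrightarrow> i < n \<Longrightarrow> j < n \<Longrightarrow> blk ns i = blk ns j \<Longrightarrow> z $$ (i,i) = z $$ (j,j)"
  unfolding block_scalars_def by blast

lemma block_scalars_mult:
  assumes z: "z \<in> block_scalars ns n" and w: "w \<in> block_scalars ns n"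
  shows "z * w \<in> block_scalars ns n"
proof (rule block_scalarsI)
  have zT: "z \<in> Tor ns n" and wT: "w \<in> Tor ns n" using z w by (simp_all add: block_scalars_Tor)
  show "z * w \<in> Tor ns n" by (rule Tor_mult[OF zT wT])
  fix i j assume ij: "i < n" "j < n" "blk ns i = blk ns j"
  show "(z * w) $$ (i,i) = (z * w) $$ (j,j)"
    using block_scalarsD[OF z ij] block_scalarsD[OF w ij] ij(1,2) by (simp add: Tor_mult_eq[OF zT wT])
qed

lemma diag_inv_block_scalars:
  assumes z: "z \<in> block_scalars ns n"
  shows "diag_inv n z \<in> block_scalars ns n"
proof (rule block_scalarsI[OF diag_inv_Tor[OF block_scalars_Tor[OF z]]])
  fix i j assume ij: "i < n" "j < n" "blk ns i = blk ns j"
  show "diag_inv n z $$ (i,i) = diag_inv n z $$ (j,j)"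
    using block_scalarsD[OF z ij] ij(1,2) by (simp add: diag_inv_index)
qed

lemma one_block_scalars: "1\<^sub>m n \<in> (block_scalars ns n :: 'a::field mat set)"
proof (rule block_scalarsI)
  have "mat_diag n (\<lambda>_. 1 :: 'a) \<in> Tor ns n" by (rule mat_diag_Tor) simp
  then show "1\<^sub>m n \<in> (Tor ns n :: 'a mat set)" by simp
qed simp

lemma finite_block_scalars: "finite (block_scalars ns n :: 'f::{finite,field} mat set)"
  using finite_carrier_mat[of n n] by (rule finite_subset[rotated]) (auto dest: block_scalars_carrier)

lemma block_scalars_commute:
  assumes z: "z \<in> block_scalars ns n" and g: "g \<in> Levi ns n"
  shows "z * g = g * z"
proof -
  have zT: "z \<in> Tor ns n" using block_scalars_Tor[OF z] .
  have g_carrier: "g \<in> carrier_mat n n" using Levi_carrier[OF g] .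
  have entry: "z $$ (i,i) * g $$ (i,j) = g $$ (i,j) * z $$ (j,j)" if ij: "i < n" "j < n" for i j
  proof (cases "blk ns i = blk ns j")
    case True
    then show ?thesis using block_scalarsD[OF z ij True] by (simp add: mult.commute)
  next
    case False
    then show ?thesis using Levi_off_block[OF g ij False] by simp
  qed
  show ?thesis
  proof (rule eq_matI)
    fix i j assume "i < dim_row (g * z)" "j < dim_col (g * z)"
    then have ij: "i < n" "j < n" using g_carrier Tor_carrier[OF zT] by auto
    show "(z * g) $$ (i,j) = (g * z) $$ (i,j)"
      using entry[OF ij] by (simp add: Tor_mult_index[OF zT g_carrier ij] mult_Tor_index[OF zT g_carrier ij])
  qed (use g_carrier Tor_carrier[OF zT] in auto)
qed

lemma block_scalars_conj:
  assumes z: "z \<in> block_scalars ns n" and g: "g \<in> Levi ns n"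
  shows "z * g * diag_inv n z = g"
proof -
  have "z * g * diag_inv n z = g * z * diag_inv n z" using block_scalars_commute[OF z g] by simp
  also have "\<dots> = g * (z * diag_inv n z)"
    by (rule assoc_mult_mat[OF Levi_carrier[OF g] block_scalars_carrier[OF z] diag_inv_carrier])
  also have "\<dots> = g"
    using Tor_mult_diag_inv(1)[OF block_scalars_Tor[OF z]] right_mult_one_mat[OF Levi_carrier[OF g]]
    by simp
  finally show ?thesis .
qed

text \<open>Commuting with \<open>1 + E\<^sub>i\<^sub>j\<close> forces column \<open>i\<close> of \<open>z\<close> to be \<open>z\<^sub>j\<^sub>j\<close> times the unit vector \<open>e\<^sub>i\<close>.\<close>
lemma commute_addrow_mat_block_scalars:
  assumes z: "z \<in> Levi ns n"
    and comm: "\<And>i j. i < n \<Longrightarrow> j < n \<Longrightarrow> i \<noteq> j \<Longrightarrow> blk ns i = blk ns j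
      \<Longrightarrow> z * addrow_mat n 1 i j = addrow_mat n 1 i j * z"
  shows "z \<in> block_scalars ns n"
proof -
  have dims: "dim_row z = n" "dim_col z = n" using carrier_matD[OF Levi_carrier[OF z]] by simp_all
  have column: "z $$ (k,i) = (if k = i then z $$ (j,j) else 0)"
    if ij: "i < n" "j < n" "i \<noteq> j" "blk ns i = blk ns j" and k: "k < n" for i j k
  proof -
    have "(z * addrow_mat n 1 i j) $$ (k,j) = (addrow_mat n 1 i j * z) $$ (k,j)"
      using comm[OF ij] by simp
    then show ?thesis
      using dims ij k by (cases "k = i") (simp_all add: mult_addrow_mat addrow_mat_mult)
  qed
  have "z $$ (r,c) = 0" if "r < n" "c < n" "r \<noteq> c" for r c
  proof (cases "blk ns r = blk ns c")
    case True
    then show ?thesis using column[of c r r] that by simp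
  next
    case False
    then show ?thesis using Levi_off_block[OF z, of r c] that by simp
  qed
  then have "z \<in> Tor ns n" using z by (simp add: Tor_def)
  then show ?thesis
  proof (rule block_scalarsI)
    fix i j assume "i < n" "j < n" "blk ns i = blk ns j"
    then show "z $$ (i,i) = z $$ (j,j)" using column[of i j i] by (cases "i = j") auto
  qed
qed

lemma centre_Levi: "centre (Levi ns n) = block_scalars ns n"
proof
  show "centre (Levi ns n) \<subseteq> block_scalars ns n"
  proof
    fix z assume "z \<in> centre (Levi ns n)"
    then have z: "z \<in> Levi ns n" and comm: "\<And>g. g \<in> Levi ns n \<Longrightarrow> z * g = g * z"
      by (auto simp: centre_def)
    show "z \<in> block_scalars ns n"
      by (rule commute_addrow_mat_block_scalars[OF z]) (blast intro: comm Levi'_Levi addrow_mat_Levi')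
  qed
  show "block_scalars ns n \<subseteq> centre (Levi ns n)"
    using block_scalars_commute block_scalars_Levi by (auto simp: centre_def)
qed

lemma centre_Levi': "centre (Levi' ns n) = block_scalars ns n \<inter> Levi' ns n"
proof
  show "centre (Levi' ns n) \<subseteq> block_scalars ns n \<inter> Levi' ns n"
  proof
    fix z assume "z \<in> centre (Levi' ns n)"
    then have z: "z \<in> Levi' ns n" and comm: "\<And>g. g \<in> Levi' ns n \<Longrightarrow> z * g = g * z"
      by (auto simp: centre_def)
    have "z \<in> block_scalars ns n"
      by (rule commute_addrow_mat_block_scalars[OF Levi'_Levi[OF z]]) (blast intro: comm addrow_mat_Levi')
    then show "z \<in> block_scalars ns n \<inter> Levi' ns n" using z by blast
  qed
  show "block_scalars ns n \<inter> Levi' ns n \<subseteq> centre (Levi' ns n)"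
    unfolding centre_def by (blast intro: block_scalars_commute Levi'_Levi)
qed

lemma block_scalars_det_fibre:
  fixes z0 :: "'a::field mat"
  assumes z0: "z0 \<in> block_scalars ns n" and c: "det z0 = c"
  shows "bij_betw (\<lambda>k. z0 * k) (block_scalars ns n \<inter> Levi' ns n) {z \<in> block_scalars ns n. det z = c}"
proof (rule bij_betw_byWitness[where f' = "\<lambda>z. diag_inv n z0 * z"])
  let ?Z = "block_scalars ns n :: 'a mat set"
  have det_mult_Z: "det (z * w) = det z * det w" if "z \<in> ?Z" "w \<in> ?Z" for z w
    by (rule det_mult[OF block_scalars_carrier[OF that(1)] block_scalars_carrier[OF that(2)]])
  have T: "z0 \<in> Tor ns n" using block_scalars_Tor[OF z0] .
  have dim: "dim_row z = n" if "z \<in> ?Z" for z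
    using carrier_matD(1)[OF block_scalars_carrier[OF that]] .
  show "\<forall>k\<in>?Z \<inter> Levi' ns n. diag_inv n z0 * (z0 * k) = k"
    using Tor_cancel(2)[OF T dim] by blast
  show "\<forall>z\<in>{z \<in> ?Z. det z = c}. z0 * (diag_inv n z0 * z) = z"
    using Tor_cancel(1)[OF T dim] by blast
  show "(\<lambda>k. z0 * k) ` (?Z \<inter> Levi' ns n) \<subseteq> {z \<in> ?Z. det z = c}"
  proof clarify
    fix k assume k: "k \<in> ?Z" "k \<in> Levi' ns n"
    then show "z0 * k \<in> ?Z \<and> det (z0 * k) = c"
      using c block_scalars_mult[OF z0 k(1)] det_mult_Z[OF z0 k(1)] by (simp add: Levi'_def)
  qed
  show "(\<lambda>z. diag_inv n z0 * z) ` {z \<in> ?Z. det z = c} \<subseteq> ?Z \<inter> Levi' ns n"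
  proof
    fix y assume "y \<in> (\<lambda>z. diag_inv n z0 * z) ` {z \<in> ?Z. det z = c}"
    then obtain z where z: "z \<in> ?Z" "det z = c" and y: "y = diag_inv n z0 * z" by blast
    have zinv: "diag_inv n z0 * z \<in> ?Z"
      by (rule block_scalars_mult[OF diag_inv_block_scalars[OF z0] z(1)])
    have "det (diag_inv n z0 * z) = 1"
      using det_mult_Z[OF diag_inv_block_scalars[OF z0] z(1)] det_diag_inv[OF T] c z(2) by simp
    then show "y \<in> ?Z \<inter> Levi' ns n"
      using zinv block_scalars_Levi[OF zinv] by (simp add: Levi'_def y)
  qed
qed

lemma card_block_scalars:
  "card (block_scalars ns n :: 'f::{finite,field} mat set)
    = card (det ` (block_scalars ns n :: 'f mat set)) * card (block_scalars ns n \<inter> Levi' ns n :: 'f mat set)"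
proof -
  let ?Z = "block_scalars ns n :: 'f mat set"
  have fibre: "card {z \<in> ?Z. det z = c} = card (?Z \<inter> Levi' ns n)" if c: "c \<in> det ` ?Z" for c
  proof -
    obtain z0 where z0: "z0 \<in> ?Z" "det z0 = c" using c by blast
    show ?thesis using bij_betw_same_card[OF block_scalars_det_fibre[OF z0]] by simp
  qed
  have "card ?Z = (\<Sum>c\<in>det ` ?Z. card {z \<in> ?Z. det z = c})"
  proof -
    have "finite ?Z" by (rule finite_block_scalars)
    then show ?thesis using sum.group[of ?Z "det ` ?Z" det "\<lambda>_. 1 :: nat"] by simp
  qed
  also have "\<dots> = card (det ` ?Z) * card (?Z \<inter> Levi' ns n)"
    using fibre by simp
  finally show ?thesis .
qed

lemma card_centre_Levi_quotient:
  "card (centre (Levi ns n :: 'f::{finite,field} mat set)) div card (centre (Levi' ns n :: 'f mat set))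
    = card (det ` (block_scalars ns n :: 'f mat set))"
proof -
  have "1\<^sub>m n \<in> (block_scalars ns n \<inter> Levi' ns n :: 'f mat set)"
    using one_block_scalars one_Levi' by blast
  then have "card (block_scalars ns n \<inter> Levi' ns n :: 'f mat set) \<noteq> 0"
    using finite_block_scalars[of ns n] by (auto simp: card_gt_0_iff)
  then show ?thesis
    unfolding centre_Levi centre_Levi' card_block_scalars by simp
qed

section \<open>Transporters\<close>

definition transporter :: "nat list \<Rightarrow> nat \<Rightarrow> ('f::field mat \<Rightarrow> 'w) \<Rightarrow> ('f mat \<Rightarrow> 'w) \<Rightarrow> 'f mat set" where
  "transporter ns n \<mu> \<nu> = {e \<in> Tor ns n. \<forall>u\<in>Uni ns n. \<nu> u = twist n e \<mu> u}"

lemma transporterD: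
  assumes "e \<in> transporter ns n \<mu> \<nu>"
  shows "e \<in> Tor ns n" and "u \<in> Uni ns n \<Longrightarrow> \<nu> u = twist n e \<mu> u"
  using assms by (simp_all add: transporter_def)

lemma twist_diag_inv: "e \<in> Tor ns n \<Longrightarrow> twist n (diag_inv n e) \<mu> u = \<mu> (diag_inv n e * u * e)"
  by (simp add: twist_def diag_inv_diag_inv)

lemma transporter_quotient_block_scalars:
  fixes \<mu> :: "'f::field mat \<Rightarrow> 'w::idom"
  assumes \<mu>: "\<mu> \<in> nondeg_chars ns n"
    and e: "e \<in> transporter ns n \<mu> \<nu>" and e0: "e0 \<in> transporter ns n \<mu> \<nu>"
  shows "e * diag_inv n e0 \<in> block_scalars ns n"
proof (rule Tor_stabilizer_block_scalars[OF \<mu>])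
  note e0T = transporterD(1)[OF e0] and eT = transporterD(1)[OF e]
  show "e * diag_inv n e0 \<in> Tor ns n" by (rule Tor_mult[OF eT diag_inv_Tor[OF e0T]])
  fix u :: "'f mat" assume u: "u \<in> Uni ns n"
  have inv_conj_Uni: "diag_inv n e0 * u * e0 \<in> Uni ns n"
    using Tor_conj_Uni[OF diag_inv_Tor[OF e0T] u] by (simp add: diag_inv_diag_inv[OF e0T])
  have "twist n (e * diag_inv n e0) \<mu> u = twist n (diag_inv n e0) (twist n e \<mu>) u"
    by (rule twist_twist[OF diag_inv_Tor[OF e0T] eT Uni_carrier[OF u], symmetric])
  also have "\<dots> = twist n (diag_inv n e0) (twist n e0 \<mu>) u"
    using transporterD(2)[OF e0 inv_conj_Uni] transporterD(2)[OF e inv_conj_Uni]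
    by (simp only: twist_diag_inv[OF e0T])
  also have "\<dots> = twist n (e0 * diag_inv n e0) \<mu> u"
    by (rule twist_twist[OF diag_inv_Tor[OF e0T] e0T Uni_carrier[OF u]])
  also have "\<dots> = \<mu> u"
    using twist_one[OF Uni_carrier[OF u]] by (simp add: Tor_mult_diag_inv(1)[OF e0T])
  finally show "twist n (e * diag_inv n e0) \<mu> u = \<mu> u" .
qed

lemma block_scalars_mult_transporter:
  fixes \<mu> :: "'f::field mat \<Rightarrow> 'w::idom"
  assumes z: "z \<in> block_scalars ns n" and e0: "e0 \<in> transporter ns n \<mu> \<nu>"
  shows "z * e0 \<in> transporter ns n \<mu> \<nu>"
proof -
  note e0T = transporterD(1)[OF e0]
  have zT: "z \<in> Tor ns n" using block_scalars_Tor[OF z] .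
  have "\<nu> u = twist n (z * e0) \<mu> u" if u: "u \<in> Uni ns n" for u
  proof -
    have "twist n (z * e0) \<mu> u = twist n z (twist n e0 \<mu>) u"
      unfolding block_scalars_commute[OF z Tor_Levi[OF e0T]]
      by (rule twist_twist[OF zT e0T Uni_carrier[OF u], symmetric])
    also have "\<dots> = \<nu> u"
      using block_scalars_conj[OF z Uni_Levi[OF u]] transporterD(2)[OF e0 u] by (simp add: twist_def)
    finally show ?thesis by simp
  qed
  then show ?thesis using Tor_mult[OF zT e0T] by (simp add: transporter_def)
qed

lemma transporter_eq:
  fixes \<mu> :: "'f::field mat \<Rightarrow> 'w::idom"
  assumes \<mu>: "\<mu> \<in> nondeg_chars ns n" and e0: "e0 \<in> transporter ns n \<mu> \<nu>"
  shows "transporter ns n \<mu> \<nu> = (\<lambda>z. z * e0) ` block_scalars ns n"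
proof
  show "transporter ns n \<mu> \<nu> \<subseteq> (\<lambda>z. z * e0) ` block_scalars ns n"
  proof
    fix e assume e: "e \<in> transporter ns n \<mu> \<nu>"
    note e0T = transporterD(1)[OF e0] and eT = transporterD(1)[OF e]
    have "e * diag_inv n e0 * e0 = e * (diag_inv n e0 * e0)"
      by (rule assoc_mult_mat[OF Tor_carrier[OF eT] diag_inv_carrier Tor_carrier[OF e0T]])
    also have "\<dots> = e"
      using Tor_mult_diag_inv(2)[OF e0T] right_mult_one_mat[OF Tor_carrier[OF eT]] by simp
    finally have "e = e * diag_inv n e0 * e0" by simp
    then show "e \<in> (\<lambda>z. z * e0) ` block_scalars ns n"
      using transporter_quotient_block_scalars[OF \<mu> e e0] by blast
  qed
  show "(\<lambda>z. z * e0) ` block_scalars ns n \<subseteq> transporter ns n \<mu> \<nu>"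
    using block_scalars_mult_transporter[OF _ e0] by blast
qed

lemma card_det_transporter:
  fixes \<mu> :: "'f::field mat \<Rightarrow> 'w::idom"
  assumes \<mu>: "\<mu> \<in> nondeg_chars ns n" and e0: "e0 \<in> transporter ns n \<mu> \<nu>"
  shows "card (det ` transporter ns n \<mu> \<nu>) = card (det ` (block_scalars ns n :: 'f mat set))"
proof -
  note e0T = transporterD(1)[OF e0]
  have "det ` transporter ns n \<mu> \<nu> = (\<lambda>c. c * det e0) ` det ` block_scalars ns n"
    unfolding transporter_eq[OF assms] image_image
    by (intro image_cong refl det_mult[OF block_scalars_carrier Tor_carrier[OF e0T]])
  moreover have "inj_on (\<lambda>c. c * det e0) (det ` block_scalars ns n)"
    using Levi_det[OF Tor_Levi[OF e0T]] by (auto intro: inj_onI)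
  ultimately show ?thesis by (simp add: card_image)
qed

lemma det_transporter_disjoint:
  fixes \<mu> :: "'f::field mat \<Rightarrow> 'w::idom"
  assumes reps: "orbit_reps ns n Reps" and "\<nu>1 \<in> Reps" "\<nu>2 \<in> Reps"
    and e1: "e1 \<in> transporter ns n \<mu> \<nu>1" and e2: "e2 \<in> transporter ns n \<mu> \<nu>2"
    and det_eq: "det e1 = det e2"
  shows "\<nu>1 = \<nu>2"
proof -
  note e1T = transporterD(1)[OF e1] and e2T = transporterD(1)[OF e2]
  define t where "t = diag_inv n e1 * e2"
  have tT: "t \<in> Tor ns n" unfolding t_def by (rule Tor_mult[OF diag_inv_Tor[OF e1T] e2T])
  have "det t = 1"
    using det_mult[OF diag_inv_carrier Tor_carrier[OF e2T]] det_diag_inv[OF e1T] det_eq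
    by (simp add: t_def)
  moreover have "\<forall>u\<in>Uni ns n. \<nu>2 u = twist n t \<nu>1 u"
  proof
    fix u :: "'f mat" assume u: "u \<in> Uni ns n"
    have "e1 * t = e2"
      unfolding t_def by (rule Tor_cancel(1)[OF e1T carrier_matD(1)[OF Tor_carrier[OF e2T]]])
    have "\<nu>2 u = twist n e2 \<mu> u" by (rule transporterD(2)[OF e2 u])
    also have "\<dots> = twist n (e1 * t) \<mu> u" using \<open>e1 * t = e2\<close> by simp
    also have "\<dots> = twist n t (twist n e1 \<mu>) u"
      by (rule twist_twist[OF tT e1T Uni_carrier[OF u], symmetric])
    also have "\<dots> = twist n t \<nu>1 u"
      using transporterD(2)[OF e1 Tor_conj_Uni[OF tT u]] by (simp add: twist_def)
    finally show "\<nu>2 u = twist n t \<nu>1 u" .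
  qed
  ultimately have "same_orbit ns n \<nu>1 \<nu>2"
    unfolding same_orbit_iff_twist using tT by blast
  then show ?thesis using reps assms(2,3) unfolding orbit_reps_def by blast
qed

lemma UN_det_transporter:
  fixes \<mu> :: "'f::field mat \<Rightarrow> 'w::idom"
  assumes reps: "orbit_reps ns n Reps" and \<mu>: "\<mu> \<in> nondeg_chars ns n"
  shows "(\<Union>\<nu>\<in>Reps. det ` transporter ns n \<mu> \<nu>) = det ` Levi ns n"
proof
  show "(\<Union>\<nu>\<in>Reps. det ` transporter ns n \<mu> \<nu>) \<subseteq> det ` Levi ns n"
    using Tor_Levi[OF transporterD(1)] by blast
  show "det ` Levi ns n \<subseteq> (\<Union>\<nu>\<in>Reps. det ` transporter ns n \<mu> \<nu>)"
  proof
    fix c :: 'f assume "c \<in> det ` Levi ns n"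
    then obtain y where y: "y \<in> Levi ns n" "c = det y" by blast
    obtain e where eT: "e \<in> Tor ns n" and "det e = det y"
      using det_Levi_eq_det_Tor[OF y(1)] by blast
    then have c: "c = det e" using y(2) by simp
    obtain \<nu> where \<nu>: "\<nu> \<in> Reps" and "same_orbit ns n (twist n e \<mu>) \<nu>"
      using reps twist_nondeg_chars[OF \<mu> eT] unfolding orbit_reps_def by blast
    then obtain t where tT: "t \<in> Tor ns n" and "det t = 1"
      and t: "\<forall>u\<in>Uni ns n. \<nu> u = twist n t (twist n e \<mu>) u"
      unfolding same_orbit_iff_twist by blast
    have "\<nu> u = twist n (e * t) \<mu> u" if "u \<in> Uni ns n" for u
    proof -
      have "\<nu> u = twist n t (twist n e \<mu>) u" using t that by blast
      also have "\<dots> = twist n (e * t) \<mu> u" by (rule twist_twist[OF tT eT Uni_carrier[OF that]])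
      finally show ?thesis .
    qed
    then have "e * t \<in> transporter ns n \<mu> \<nu>"
      using Tor_mult[OF eT tT] by (simp add: transporter_def)
    moreover have "det (e * t) = c"
      using det_mult[OF Tor_carrier[OF eT] Tor_carrier[OF tT]] \<open>det t = 1\<close> c by simp
    ultimately show "c \<in> (\<Union>\<nu>\<in>Reps. det ` transporter ns n \<mu> \<nu>)"
      using \<nu> by blast
  qed
qed

lemma ex_transversal:
  fixes g :: "'a \<Rightarrow> 'b" and E :: "'r \<Rightarrow> 'a set"
  assumes card: "\<And>\<nu>. \<nu> \<in> R \<Longrightarrow> finite (g ` E \<nu>) \<and> card (g ` E \<nu>) = m"
    and disjoint: "\<And>\<nu> \<nu>' x x'. \<nu> \<in> R \<Longrightarrow> \<nu>' \<in> R \<Longrightarrow> x \<in> E \<nu> \<Longrightarrow> x' \<in> E \<nu>' \<Longrightarrow> g x = g x' \<Longrightarrow> \<nu> = \<nu>'"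
  shows "\<exists>e. (\<forall>k\<in>{0..<m} \<times> R. e k \<in> E (snd k))
    \<and> bij_betw (\<lambda>k. g (e k)) ({0..<m} \<times> R) (\<Union>\<nu>\<in>R. g ` E \<nu>)"
proof -
  have "\<forall>\<nu>\<in>R. \<exists>h. bij_betw h {0..<m} (g ` E \<nu>)"
    using card ex_bij_betw_nat_finite by metis
  then obtain b where b: "\<And>\<nu>. \<nu> \<in> R \<Longrightarrow> bij_betw (b \<nu>) {0..<m} (g ` E \<nu>)"
    using bchoice by metis
  have "\<forall>k\<in>{0..<m} \<times> R. \<exists>x. x \<in> E (snd k) \<and> g x = b (snd k) (fst k)"
    using bij_betwE[OF b] by fastforce
  then obtain e where e: "\<And>k. k \<in> {0..<m} \<times> R \<Longrightarrow> e k \<in> E (snd k) \<and> g (e k) = b (snd k) (fst k)"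
    using bchoice by metis
  have "inj_on (\<lambda>k. g (e k)) ({0..<m} \<times> R)"
  proof (rule inj_onI)
    fix k k' assume k: "k \<in> {0..<m} \<times> R" and k': "k' \<in> {0..<m} \<times> R" and eq: "g (e k) = g (e k')"
    have snd_eq: "snd k = snd k'"
      using disjoint[of "snd k" "snd k'" "e k" "e k'"] e[OF k] e[OF k'] k k' eq by (auto simp: mem_Times_iff)
    have b_eq: "b (snd k) (fst k) = b (snd k) (fst k')"
      using eq e[OF k] e[OF k'] snd_eq by simp
    have kR: "snd k \<in> R" "fst k \<in> {0..<m}" "fst k' \<in> {0..<m}" using k k' by (auto simp: mem_Times_iff)
    have "fst k = fst k'"
      by (rule inj_onD[OF bij_betw_imp_inj_on[OF b[OF kR(1)]] b_eq kR(2,3)])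
    with snd_eq show "k = k'" by (simp add: prod_eq_iff)
  qed
  moreover have "(\<lambda>k. g (e k)) ` ({0..<m} \<times> R) = (\<Union>\<nu>\<in>R. g ` E \<nu>)"
  proof
    show "(\<lambda>k. g (e k)) ` ({0..<m} \<times> R) \<subseteq> (\<Union>\<nu>\<in>R. g ` E \<nu>)"
      using e by (fastforce simp: mem_Times_iff)
    show "(\<Union>\<nu>\<in>R. g ` E \<nu>) \<subseteq> (\<lambda>k. g (e k)) ` ({0..<m} \<times> R)"
    proof clarify
      fix \<nu> x assume \<nu>: "\<nu> \<in> R" and x: "x \<in> E \<nu>"
      have "g x \<in> b \<nu> ` {0..<m}" using bij_betw_imp_surj_on[OF b[OF \<nu>]] x by blast
      then obtain j where j: "j < m" "g x = b \<nu> j" by auto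
      then have "g x = g (e (j, \<nu>))" using e[of "(j, \<nu>)"] \<nu> by simp
      then show "g x \<in> (\<lambda>k. g (e k)) ` ({0..<m} \<times> R)" using j \<nu> by force
    qed
  qed
  ultimately have "bij_betw (\<lambda>k. g (e k)) ({0..<m} \<times> R) (\<Union>\<nu>\<in>R. g ` E \<nu>)"
    unfolding bij_betw_def ..
  moreover have "\<forall>k\<in>{0..<m} \<times> R. e k \<in> E (snd k)" using e by blast
  ultimately show ?thesis by blast
qed

lemma ex_transporter_transversal:
  fixes \<mu> :: "'f::{finite,field} mat \<Rightarrow> 'w::idom"
  assumes reps: "orbit_reps ns n Reps" and \<mu>: "\<mu> \<in> nondeg_chars ns n"
    and q: "(of_nat (card (UNIV :: 'f set)) :: 'w) \<noteq> 0"
  shows "\<exists>e. (\<forall>k\<in>{0..<card (det ` (block_scalars ns n :: 'f mat set))} \<times> Reps.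
      e k \<in> transporter ns n \<mu> (snd k))
    \<and> bij_betw (\<lambda>k. det (e k)) ({0..<card (det ` (block_scalars ns n :: 'f mat set))} \<times> Reps)
      (det ` Levi ns n)"
proof -
  let ?m = "card (det ` (block_scalars ns n :: 'f mat set))"
  have card: "finite (det ` transporter ns n \<mu> \<nu>) \<and> card (det ` transporter ns n \<mu> \<nu>) = ?m"
    if "\<nu> \<in> Reps" for \<nu>
  proof
    show "finite (det ` transporter ns n \<mu> \<nu>)" by (rule finite_subset[OF subset_UNIV finite_UNIV])
    have "\<nu> \<in> nondeg_chars ns n" using reps that unfolding orbit_reps_def by blast
    then obtain e0 where "e0 \<in> transporter ns n \<mu> \<nu>"
      using nondeg_chars_Tor_transitive[OF \<mu> _ q] unfolding transporter_def by blast
    then show "card (det ` transporter ns n \<mu> \<nu>) = ?m" by (rule card_det_transporter[OF \<mu>])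
  qed
  have "\<exists>e. (\<forall>k\<in>{0..<?m} \<times> Reps. e k \<in> transporter ns n \<mu> (snd k))
      \<and> bij_betw (\<lambda>k. det (e k)) ({0..<?m} \<times> Reps) (\<Union>\<nu>\<in>Reps. det ` transporter ns n \<mu> \<nu>)"
  proof (rule ex_transversal)
    show "\<And>\<nu>. \<nu> \<in> Reps \<Longrightarrow> finite (det ` transporter ns n \<mu> \<nu>) \<and> card (det ` transporter ns n \<mu> \<nu>) = ?m"
      by (rule card)
    show "\<And>\<nu> \<nu>' x x'. \<nu> \<in> Reps \<Longrightarrow> \<nu>' \<in> Reps \<Longrightarrow> x \<in> transporter ns n \<mu> \<nu>
        \<Longrightarrow> x' \<in> transporter ns n \<mu> \<nu>' \<Longrightarrow> det x = det x' \<Longrightarrow> \<nu> = \<nu>'"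
      by (rule det_transporter_disjoint[OF reps])
  qed
  then show ?thesis unfolding UN_det_transporter[OF reps \<mu>] .
qed

section \<open>Restriction to L'\<close>

lemma Levi'_subset_carrier: "Levi' ns n \<subseteq> carrier_mat n n"
  by (auto simp: Levi'_def Levi_def)

definition square_part :: "nat \<Rightarrow> 'a mat \<Rightarrow> 'a mat" where
  "square_part n x = mat n n (\<lambda>(i,l). row x i $ l)"

definition widen :: "nat \<Rightarrow> 'a mat \<Rightarrow> 'a mat" where
  "widen n A = mat n (Suc n) (\<lambda>(i,j). A $$ (i,j))"

lemma square_part_carrier [simp]: "square_part n x \<in> carrier_mat n n"
  by (simp add: square_part_def)

lemma square_part_id: "x \<in> carrier_mat n n \<Longrightarrow> square_part n x = x"
  unfolding square_part_def by (rule eq_matI) auto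

lemma mult_square_part:
  assumes x: "dim_row x = n" and s: "s \<in> carrier_mat n n"
  shows "x * s = square_part n x * (s :: 'a::semiring_0 mat)"
proof (rule eq_matI)
  fix i j assume "i < dim_row (square_part n x * s)" "j < dim_col (square_part n x * s)"
  then have ij: "i < n" "j < n" using carrier_matD[OF s] by (simp_all add: square_part_def)
  show "(x * s) $$ (i,j) = (square_part n x * s) $$ (i,j)"
    using ij x carrier_matD[OF s] by (simp add: scalar_prod_def square_part_def)
qed (use x carrier_matD[OF s] in \<open>simp_all add: square_part_def\<close>)

lemma square_part_widen: "A \<in> carrier_mat n n \<Longrightarrow> square_part n (widen n A) = A"
  unfolding square_part_def widen_def by (rule eq_matI) auto

lemma widen_not_carrier: "widen n A \<notin> carrier_mat n n"
proof
  assume "widen n A \<in> carrier_mat n n"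
  then have "dim_col (widen n A) = n" by (rule carrier_matD)
  then show False by (simp add: widen_def)
qed

text \<open>Since \<open>x * s\<close> is a square matrix whenever \<open>x\<close> has \<open>n\<close> rows, junk arguments \<open>x \<notin> G\<close> can
  have \<open>x * s \<in> G\<close>; on those, evaluating \<open>f\<close> at a non-square matrix keeps the restricted
  translate equivariant under right translation while it still vanishes when \<open>f\<close> vanishes off
  the square matrices.\<close>
definition left_translate :: "nat \<Rightarrow> 'a::semiring_0 mat \<Rightarrow> 'a mat \<Rightarrow> 'a mat" where
  "left_translate n e x = (if dim_col x = n then e * x else widen n (e * square_part n x))"

definition restrict_translate :: "nat \<Rightarrow> 'a::semiring_0 mat set \<Rightarrow> 'a mat \<Rightarrow> ('a mat \<Rightarrow> 'w::zero) \<Rightarrow> 'a mat \<Rightarrow> 'w" where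
  "restrict_translate n G e f x =
    (if dim_row x = n \<and> square_part n x \<in> G then f (left_translate n e x) else 0)"

lemma left_translate_mult:
  assumes x: "dim_row x = n" and e: "e \<in> carrier_mat n n" and s: "s \<in> carrier_mat n n"
  shows "left_translate n e x * s = e * (square_part n x * (s :: 'a::semiring_0 mat))"
proof (cases "dim_col x = n")
  case True
  have cx: "x \<in> carrier_mat n n" using x True by (intro carrier_matI)
  then show ?thesis
    using True assoc_mult_mat[OF e cx s] square_part_id[OF cx] by (simp add: left_translate_def)
next
  case False
  have "widen n (e * square_part n x) * s = square_part n (widen n (e * square_part n x)) * s"
    by (rule mult_square_part[OF _ s]) (simp add: widen_def)
  also have "square_part n (widen n (e * square_part n x)) = e * square_part n x"
    by (rule square_part_widen[OF mult_carrier_mat[OF e square_part_carrier]])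
  also have "e * square_part n x * s = e * (square_part n x * s)"
    by (rule assoc_mult_mat[OF e square_part_carrier s])
  finally show ?thesis using False by (simp add: left_translate_def)
qed

lemma restrict_translate_in:
  assumes "G \<subseteq> carrier_mat n n" "x \<in> G"
  shows "restrict_translate n G e f x = f (e * x)"
proof -
  have cx: "x \<in> carrier_mat n n" using assms by blast
  then show ?thesis
    using assms(2) carrier_matD[OF cx] square_part_id[OF cx]
    by (simp add: restrict_translate_def left_translate_def)
qed

lemma restrict_translate_out:
  assumes "G \<subseteq> carrier_mat n n" "\<And>y. y \<notin> carrier_mat n n \<Longrightarrow> f y = 0" "x \<notin> G"
  shows "restrict_translate n G e f x = 0"
proof -
  have "f (left_translate n e x) = 0" if "dim_row x = n" "square_part n x \<in> G"
  proof (cases "dim_col x = n")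
    case True
    then have "x \<in> carrier_mat n n" using that(1) by (intro carrier_matI)
    then show ?thesis using that(2) assms(3) by (simp add: square_part_id)
  qed (simp add: left_translate_def assms(2) widen_not_carrier)
  then show ?thesis by (simp add: restrict_translate_def)
qed

lemma restrict_translate_ract:
  fixes G :: "'a::field mat set"
  assumes G: "G \<subseteq> carrier_mat n n" and mult: "\<And>a b. a \<in> G \<Longrightarrow> b \<in> G \<Longrightarrow> a * b \<in> G"
    and cancel: "\<And>x. x \<in> carrier_mat n n \<Longrightarrow> x * s \<in> G \<Longrightarrow> x \<in> G"
    and s: "s \<in> G" and e: "e \<in> carrier_mat n n"
  shows "restrict_translate n G e (ract s f) = ract s (restrict_translate n G e f)"
proof
  fix x
  have cs: "s \<in> carrier_mat n n" using G s by blast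
  show "restrict_translate n G e (ract s f) x = ract s (restrict_translate n G e f) x"
  proof (cases "dim_row x = n")
    case True
    let ?x = "square_part n x"
    have xs: "x * s = ?x * s" by (rule mult_square_part[OF True cs])
    have cxs: "?x * s \<in> carrier_mat n n" by (rule mult_carrier_mat[OF square_part_carrier cs])
    have G_iff: "?x * s \<in> G \<longleftrightarrow> ?x \<in> G"
      using mult[OF _ s] cancel[OF square_part_carrier] by blast
    have "ract s (restrict_translate n G e f) x = (if ?x \<in> G then f (e * (?x * s)) else 0)"
      using True G_iff carrier_matD[OF cxs] square_part_id[OF cxs]
      by (simp add: ract_def restrict_translate_def left_translate_def xs)
    moreover have "restrict_translate n G e (ract s f) x = (if ?x \<in> G then f (e * (?x * s)) else 0)"
      using True left_translate_mult[OF True e cs] by (simp add: ract_def restrict_translate_def)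
    ultimately show ?thesis by simp
  qed (simp add: restrict_translate_def ract_def)
qed

definition sum_mod :: "'f::field mat set \<Rightarrow> 'f mat set \<Rightarrow> 'i set \<Rightarrow> ('i \<Rightarrow> 'f mat \<Rightarrow> 'w::idom)
    \<Rightarrow> ('i \<Rightarrow> 'f mat \<Rightarrow> 'w) set" where
  "sum_mod H U V \<chi> = {F. (\<forall>k\<in>V. F k \<in> ind_mod H U (\<chi> k)) \<and> (\<forall>k. k \<notin> V \<longrightarrow> F k = (\<lambda>_. 0))}"

lemma dsum_mod_eq_sum_mod: "dsum_mod ns n m Reps = sum_mod (Levi' ns n) (Uni ns n) ({0..<m} \<times> Reps) snd"
  by (auto simp: dsum_mod_def sum_mod_def)

lemma ind_mod_cong: "(\<And>u. u \<in> U \<Longrightarrow> \<mu> u = \<nu> u) \<Longrightarrow> ind_mod H U \<mu> = ind_mod H U \<nu>"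
  by (simp add: ind_mod_def)

lemma restrict_translate_ind_mod:
  fixes \<mu> :: "'f::field mat \<Rightarrow> 'w::idom"
  assumes e: "e \<in> Tor ns n" and f: "f \<in> ind_mod (Levi ns n) (Uni ns n) \<mu>"
  shows "restrict_translate n (Levi' ns n) e f \<in> ind_mod (Levi' ns n) (Uni ns n) (twist n e \<mu>)"
  unfolding ind_mod_def mem_Collect_eq
proof (intro conjI ballI allI impI)
  fix h u :: "'f mat" assume h: "h \<in> Levi' ns n" and u: "u \<in> Uni ns n"
  have "e * (u * h) = (e * u * diag_inv n e) * (e * h)"
    using carrier_matD[OF Levi'_carrier[OF h]] carrier_matD[OF Uni_carrier[OF u]]
      carrier_matD[OF Tor_carrier[OF e]]
    by (simp add: assoc_mult_mat_dim Tor_cancel(2)[OF e])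
  moreover have "e * h \<in> Levi ns n" by (rule Levi_mult[OF Tor_Levi[OF e] Levi'_Levi[OF h]])
  ultimately have "f (e * (u * h)) = twist n e \<mu> u * f (e * h)"
    using f Tor_conj_Uni[OF e u] unfolding ind_mod_def twist_def by simp
  then show "restrict_translate n (Levi' ns n) e f (u * h) = twist n e \<mu> u * restrict_translate n (Levi' ns n) e f h"
    using h Levi'_mult[OF Uni_Levi'[OF u] h] by (simp add: restrict_translate_in[OF Levi'_subset_carrier])
next
  fix x :: "'f mat" assume x: "x \<notin> Levi' ns n"
  have "f y = 0" if "y \<notin> carrier_mat n n" for y
    using f that Levi_carrier unfolding ind_mod_def by blast
  then show "restrict_translate n (Levi' ns n) e f x = 0"
    by (rule restrict_translate_out[OF Levi'_subset_carrier _ x])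
qed

definition det_index :: "'i set \<Rightarrow> ('i \<Rightarrow> 'f::field mat) \<Rightarrow> 'f mat \<Rightarrow> 'i" where
  "det_index V e y = inv_into V (\<lambda>k. det (e k)) (det y)"

definition restrict_components :: "nat list \<Rightarrow> nat \<Rightarrow> 'i set \<Rightarrow> ('i \<Rightarrow> 'f::field mat)
    \<Rightarrow> ('f mat \<Rightarrow> 'w::zero) \<Rightarrow> 'i \<Rightarrow> 'f mat \<Rightarrow> 'w" where
  "restrict_components ns n V e f k =
    (if k \<in> V then restrict_translate n (Levi' ns n) (e k) f else (\<lambda>_. 0))"

definition glue_components :: "nat list \<Rightarrow> nat \<Rightarrow> 'i set \<Rightarrow> ('i \<Rightarrow> 'f::field mat)
    \<Rightarrow> ('i \<Rightarrow> 'f mat \<Rightarrow> 'w::zero) \<Rightarrow> 'f mat \<Rightarrow> 'w" where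
  "glue_components ns n V e F y =
    (if y \<in> Levi ns n then F (det_index V e y) (diag_inv n (e (det_index V e y)) * y) else 0)"

context
  fixes ns :: "nat list" and n :: nat and \<mu> :: "'f::{finite,field} mat \<Rightarrow> 'w::idom"
    and V :: "'i set" and e :: "'i \<Rightarrow> 'f mat" and \<chi> :: "'i \<Rightarrow> 'f mat \<Rightarrow> 'w"
  assumes e_Tor: "\<And>k. k \<in> V \<Longrightarrow> e k \<in> Tor ns n"
    and det_e_bij: "bij_betw (\<lambda>k. det (e k)) V (det ` Levi ns n)"
    and \<chi>_twist: "\<And>k u. k \<in> V \<Longrightarrow> u \<in> Uni ns n \<Longrightarrow> \<chi> k u = twist n (e k) \<mu> u"
begin

lemma det_indexD:
  assumes "y \<in> Levi ns n"
  shows "det_index V e y \<in> V" and "det (e (det_index V e y)) = det y"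
proof -
  have y: "det y \<in> (\<lambda>k. det (e k)) ` V" using assms det_e_bij unfolding bij_betw_def by blast
  show "det_index V e y \<in> V" unfolding det_index_def by (rule inv_into_into[OF y])
  show "det (e (det_index V e y)) = det y" unfolding det_index_def using f_inv_into_f[OF y] by simp
qed

lemma det_index_eq: "k \<in> V \<Longrightarrow> det y = det (e k) \<Longrightarrow> det_index V e y = k"
  unfolding det_index_def using bij_betw_inv_into_left[OF det_e_bij] by simp

lemma Levi_factor:
  assumes y: "y \<in> Levi ns n" and k: "k \<in> V" and det: "det (e k) = det y"
  shows "diag_inv n (e k) * y \<in> Levi' ns n" and "e k * (diag_inv n (e k) * y) = y"
proof -
  have T: "e k \<in> Tor ns n" using e_Tor[OF k] .
  have "det (diag_inv n (e k) * y) = det (diag_inv n (e k)) * det (e k)"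
    using det_mult[OF diag_inv_carrier Levi_carrier[OF y]] det by simp
  then show "diag_inv n (e k) * y \<in> Levi' ns n"
    using det_diag_inv[OF T] Levi_mult[OF Tor_Levi[OF diag_inv_Tor[OF T]] y] by (simp add: Levi'_def)
  show "e k * (diag_inv n (e k) * y) = y"
    by (rule Tor_cancel(1)[OF T carrier_matD(1)[OF Levi_carrier[OF y]]])
qed

lemma restrict_components_sum_mod:
  assumes f: "f \<in> ind_mod (Levi ns n) (Uni ns n) \<mu>"
  shows "restrict_components ns n V e f \<in> sum_mod (Levi' ns n) (Uni ns n) V \<chi>"
proof -
  have "restrict_translate n (Levi' ns n) (e k) f \<in> ind_mod (Levi' ns n) (Uni ns n) (\<chi> k)" if k: "k \<in> V" for k
  proof -
    have "ind_mod (Levi' ns n) (Uni ns n) (\<chi> k) = ind_mod (Levi' ns n) (Uni ns n) (twist n (e k) \<mu>)"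
      by (rule ind_mod_cong) (rule \<chi>_twist[OF k])
    then show ?thesis using restrict_translate_ind_mod[OF e_Tor[OF k] f] by simp
  qed
  then show ?thesis by (simp add: sum_mod_def restrict_components_def)
qed

lemma glue_components_ind_mod:
  assumes F: "F \<in> sum_mod (Levi' ns n) (Uni ns n) V \<chi>"
  shows "glue_components ns n V e F \<in> ind_mod (Levi ns n) (Uni ns n) \<mu>"
  unfolding ind_mod_def mem_Collect_eq
proof (intro conjI ballI allI impI)
  fix h u :: "'f mat" assume h: "h \<in> Levi ns n" and u: "u \<in> Uni ns n"
  define k where "k = det_index V e h"
  have k: "k \<in> V" "det (e k) = det h" unfolding k_def using det_indexD[OF h] by simp_all
  have T: "e k \<in> Tor ns n" using e_Tor[OF k(1)] .
  let ?h = "diag_inv n (e k) * h" and ?u = "diag_inv n (e k) * u * e k"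
  have uh: "u * h \<in> Levi ns n" by (rule Levi_mult[OF Uni_Levi[OF u] h])
  have "det (u * h) = det h" using Uni_det[OF u] det_mult[OF Uni_carrier[OF u] Levi_carrier[OF h]] by simp
  then have k_uh: "det_index V e (u * h) = k" using det_index_eq[OF k(1)] k(2) by simp
  have k_h: "det_index V e h = k" by (simp add: k_def)
  have u_conj: "?u \<in> Uni ns n"
    using Tor_conj_Uni[OF diag_inv_Tor[OF T] u] by (simp add: diag_inv_diag_inv[OF T])
  have "diag_inv n (e k) * (u * h) = ?u * ?h"
    using carrier_matD[OF Levi_carrier[OF h]] carrier_matD[OF Uni_carrier[OF u]]
      carrier_matD[OF Tor_carrier[OF T]]
    by (simp add: assoc_mult_mat_dim Tor_cancel(1)[OF T])
  moreover have "F k \<in> ind_mod (Levi' ns n) (Uni ns n) (\<chi> k)" using F k(1) by (simp add: sum_mod_def)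
  then have "F k (?u * ?h) = \<chi> k ?u * F k ?h"
    using u_conj Levi_factor(1)[OF h k] unfolding ind_mod_def by blast
  moreover have "\<chi> k ?u = \<mu> u"
    using \<chi>_twist[OF k(1) u_conj] Tor_conj_cancel[OF T Uni_carrier[OF u]] by (simp add: twist_def)
  ultimately show "glue_components ns n V e F (u * h) = \<mu> u * glue_components ns n V e F h"
    using h uh by (simp add: glue_components_def k_h k_uh)
next
  fix x :: "'f mat" assume "x \<notin> Levi ns n"
  then show "glue_components ns n V e F x = 0" by (simp add: glue_components_def)
qed

lemma glue_restrict_components:
  assumes f: "f \<in> ind_mod (Levi ns n) (Uni ns n) \<mu>"
  shows "glue_components ns n V e (restrict_components ns n V e f) = f"
proof
  fix y :: "'f mat"
  show "glue_components ns n V e (restrict_components ns n V e f) y = f y"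
  proof (cases "y \<in> Levi ns n")
    case True
    note k = det_indexD[OF True]
    show ?thesis
      using True k(1) Levi_factor[OF True k]
      by (simp add: glue_components_def restrict_components_def restrict_translate_in[OF Levi'_subset_carrier])
  next
    case False
    then show ?thesis using f by (simp add: glue_components_def ind_mod_def)
  qed
qed

lemma restrict_glue_components:
  assumes F: "F \<in> sum_mod (Levi' ns n) (Uni ns n) V \<chi>"
  shows "restrict_components ns n V e (glue_components ns n V e F) = F"
proof (intro ext)
  fix k x
  show "restrict_components ns n V e (glue_components ns n V e F) k x = F k x"
  proof (cases "k \<in> V")
    case k: True
    have T: "e k \<in> Tor ns n" using e_Tor[OF k] .
    show ?thesis
    proof (cases "x \<in> Levi' ns n")
      case True
      have ex: "e k * x \<in> Levi ns n" by (rule Levi_mult[OF Tor_Levi[OF T] Levi'_Levi[OF True]])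
      have "det (e k * x) = det (e k)"
        using det_mult[OF Tor_carrier[OF T] Levi'_carrier[OF True]] True by (simp add: Levi'_def)
      then have "det_index V e (e k * x) = k" by (rule det_index_eq[OF k])
      then show ?thesis
        using True k ex Tor_cancel(2)[OF T carrier_matD(1)[OF Levi'_carrier[OF True]]]
        by (simp add: restrict_components_def restrict_translate_in[OF Levi'_subset_carrier] glue_components_def)
    next
      case False
      have "glue_components ns n V e F y = 0" if "y \<notin> carrier_mat n n" for y
        using that Levi_carrier by (auto simp: glue_components_def)
      then have "restrict_translate n (Levi' ns n) (e k) (glue_components ns n V e F) x = 0"
        by (rule restrict_translate_out[OF Levi'_subset_carrier _ False])
      moreover have "F k x = 0" using F k False unfolding sum_mod_def ind_mod_def by blast
      ultimately show ?thesis using k by (simp add: restrict_components_def)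
    qed
  next
    case False
    then show ?thesis using F by (simp add: restrict_components_def sum_mod_def)
  qed
qed

lemma restrict_components_iso:
  "gmod_iso (Levi' ns n) (ind_mod (Levi ns n) (Uni ns n) \<mu>) (sum_mod (Levi' ns n) (Uni ns n) V \<chi>)
     (restrict_components ns n V e)"
  unfolding gmod_iso_def
proof (intro conjI)
  show "bij_betw (restrict_components ns n V e) (ind_mod (Levi ns n) (Uni ns n) \<mu>)
      (sum_mod (Levi' ns n) (Uni ns n) V \<chi>)"
    by (rule bij_betw_byWitness[where f' = "glue_components ns n V e"])
      (auto simp: glue_restrict_components restrict_glue_components
        restrict_components_sum_mod glue_components_ind_mod)
  show "\<forall>a. \<forall>f\<in>ind_mod (Levi ns n) (Uni ns n) \<mu>. \<forall>g\<in>ind_mod (Levi ns n) (Uni ns n) \<mu>.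
      restrict_components ns n V e (\<lambda>x. a * f x + g x)
        = (\<lambda>k x. a * restrict_components ns n V e f k x + restrict_components ns n V e g k x)"
    by (auto intro!: ext simp: restrict_components_def restrict_translate_def)
  show "\<forall>s\<in>Levi' ns n. \<forall>f\<in>ind_mod (Levi ns n) (Uni ns n) \<mu>.
      restrict_components ns n V e (ract s f) = (\<lambda>k. ract s (restrict_components ns n V e f k))"
  proof (intro ballI ext)
    fix s :: "'f mat" and f and k and x :: "'f mat" assume s: "s \<in> Levi' ns n"
    show "restrict_components ns n V e (ract s f) k x = ract s (restrict_components ns n V e f k) x"
    proof (cases "k \<in> V")
      case True
      have "restrict_translate n (Levi' ns n) (e k) (ract s f) = ract s (restrict_translate n (Levi' ns n) (e k) f)"
        by (rule restrict_translate_ract[OF Levi'_subset_carrier Levi'_mult Levi'_right_cancel[OF _ s] s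
              Tor_carrier[OF e_Tor[OF True]]])
      then show ?thesis using True by (simp add: restrict_components_def)
    next
      case False
      then show ?thesis by (simp add: restrict_components_def ract_def)
    qed
  qed
qed

end

theorem proposition3p9:
  fixes ns :: "nat list" and n l :: nat
    and \<mu>0 :: "'f::{finite,field} mat \<Rightarrow> 'w::idom"
    and Reps :: "('f mat \<Rightarrow> 'w) set"
  assumes "0 \<notin> set ns" and "sum_list ns = n"
    and "witt_alg_closed l TYPE('w)" and "\<not> l dvd card (UNIV :: 'f set)"
    and "\<mu>0 \<in> nondeg_chars ns n"
    and "orbit_reps ns n Reps"
  shows "\<exists>\<Phi>. gmod_iso (Levi' ns n) (ind_mod (Levi ns n) (Uni ns n) \<mu>0)
            (dsum_mod ns n (card (centre (Levi ns n :: 'f mat set)) div card (centre (Levi' ns n :: 'f mat set))) Reps)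
            \<Phi>"
proof -
  define V where "V = {0..<card (det ` (block_scalars ns n :: 'f mat set))} \<times> Reps"
  have q: "(of_nat (card (UNIV :: 'f set)) :: 'w) \<noteq> 0"
    by (rule of_nat_witt_neq_0[OF assms(3,4)])
  obtain e where e: "\<forall>k\<in>V. e k \<in> transporter ns n \<mu>0 (snd k)"
    and bij: "bij_betw (\<lambda>k. det (e k)) V (det ` Levi ns n)"
    using ex_transporter_transversal[OF assms(6,5) q] unfolding V_def by blast
  have "gmod_iso (Levi' ns n) (ind_mod (Levi ns n) (Uni ns n) \<mu>0)
      (sum_mod (Levi' ns n) (Uni ns n) V snd) (restrict_components ns n V e)"
  proof (rule restrict_components_iso)
    show "\<And>k. k \<in> V \<Longrightarrow> e k \<in> Tor ns n" using e transporterD(1) by blast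
    show "bij_betw (\<lambda>k. det (e k)) V (det ` Levi ns n)" by (rule bij)
    show "\<And>k u. k \<in> V \<Longrightarrow> u \<in> Uni ns n \<Longrightarrow> snd k u = twist n (e k) \<mu>0 u"
      using e transporterD(2) by blast
  qed
  then show ?thesis
    unfolding card_centre_Levi_quotient dsum_mod_eq_sum_mod V_def by blast
qed

end
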